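(* Let $d>k\geq1$, $\varepsilon\in(0,1)$, $A\succeq0$ symmetric with $\lambda_k>\lambda_{k+1}$, $\beta>0$ with $\lambda_k>2\sqrt\beta\geq\lambda_{k+1}$, $X_0\in\mathrm{St}(d,k)$ with $\cos\theta_k(U_k,X_0)>0$, and ANPM perturbations satisfying for all $t\geq0$: $\|U_{-k}^\top\Xi_t\|_2\leq c(\lambda_k-2\sqrt\beta)\varepsilon$ and $\|U_k^\top\Xi_t\|_2\leq c(\lambda_k-2\sqrt\beta)\cos\theta_k(U_k,X_t)$, $c=1/32$. Let $h_t:=\tan\theta_k(U_k,X_t)$. Then for all $t\geq1$, $$h_t\leq c_1\gamma^th_0+\eta\sum_{s=0}^{t-1}(s+1)\gamma^s(1+h_{t-1-s}),$$ where $\gamma:=\frac{\sqrt\beta}{(1-c)\lambda_k^++c\sqrt\beta}\in[0,1)$, $\eta:=c_2\Delta\varepsilon$, $c_1:=31/15$, $c_2:=2/15$.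
   Context: $A$ has eigenvalues $\lambda_1\geq\dots\geq\lambda_d\geq0$, orthonormal eigenvectors $u_i$; $U_k:=[u_1..u_k]$, $U_{-k}:=[u_{k+1}..u_d]$. $\Delta:=(\lambda_k-2\sqrt\beta)/\lambda_k$; $\lambda_k^+:=\frac{\lambda_k+\sqrt{\lambda_k^2-4\beta}}{2}$. QR: $Y=XR$, $X^\top X=I_k$, $R$ upper triangular, nonnegative diagonal; $\theta_k(U,X):=\arccos\sigma_{\min}(U^\top X)$. ANPM: $(X_1,R_1)=\mathrm{QR}(\tfrac12AX_0+\Xi_0)$; for $t\geq1$, $Y_{t+1}=AX_t-\beta X_{t-1}R_t^{-1}+\Xi_t$, $(X_{t+1},R_{t+1})=\mathrm{QR}(Y_{t+1})$. *)

theory Defs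
  imports Complex_Main "Jordan_Normal_Form.Matrix"
begin

definition vnorm :: "real vec \<Rightarrow> real" where
  "vnorm v = sqrt (v \<bullet> v)"

definition opnorm2 :: "real mat \<Rightarrow> real" where
  "opnorm2 M = Sup {vnorm (M *\<^sub>v x) | x. x \<in> carrier_vec (dim_col M) \<and> vnorm x = 1}"

definition sigma_min :: "real mat \<Rightarrow> real" where
  "sigma_min M = Inf {vnorm (M *\<^sub>v x) | x. x \<in> carrier_vec (dim_col M) \<and> vnorm x = 1}"

definition theta_k :: "real mat \<Rightarrow> real mat \<Rightarrow> real" where
  "theta_k U X = arccos (sigma_min (transpose_mat U * X))"

(* matrix inverse of a square matrix (arbitrary if singular) *)
definition minv :: "real mat \<Rightarrow> real mat" where
  "minv R = (SOME B. B \<in> carrier_mat (dim_row R) (dim_row R) \<and>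
      R * B = 1\<^sub>m (dim_row R) \<and> B * R = 1\<^sub>m (dim_row R))"

definition is_QR :: "nat \<Rightarrow> nat \<Rightarrow> real mat \<Rightarrow> real mat \<Rightarrow> real mat \<Rightarrow> bool" where
  "is_QR d k Y X R \<longleftrightarrow> X \<in> carrier_mat d k \<and> R \<in> carrier_mat k k \<and>
     transpose_mat X * X = 1\<^sub>m k \<and> upper_triangular R \<and>
     (\<forall>i<k. R $$ (i,i) \<ge> 0) \<and> Y = X * R"

definition stiefel :: "nat \<Rightarrow> nat \<Rightarrow> real mat set" where
  "stiefel d k = {X. X \<in> carrier_mat d k \<and> transpose_mat X * X = 1\<^sub>m k}"

(* matrix whose columns are u_(a+1), ..., u_(a+m)  (eigenvectors indexed from 1) *)
definition cols_mat :: "nat \<Rightarrow> (nat \<Rightarrow> real vec) \<Rightarrow> nat \<Rightarrow> nat \<Rightarrow> real mat" where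
  "cols_mat d u a m = mat d m (\<lambda>(i,j). u (a + j + 1) $ i)"

end

theory Submission
  imports Defs "HOL-Analysis.L2_Norm" "Jordan_Normal_Form.Determinant"
begin

text \<open>Fix \<open>t\<close> and a nonzero \<open>v\<close> and pull \<open>v\<close> back through the QR factors:
  \<open>x\<^sub>t\<^sub>-\<^sub>1 = v\<close>, \<open>x\<^sub>j\<^sub>-\<^sub>1 = R\<^sub>j\<^sup>-\<^sup>1 x\<^sub>j\<close>. The vectors \<open>z\<^sub>j = X\<^sub>j R\<^sub>j x\<^sub>j\<^sub>-\<^sub>1\<close> then satisfy
  the unnormalised recurrence \<open>z\<^sub>j\<^sub>+\<^sub>1 = A z\<^sub>j - beta z\<^sub>j\<^sub>-\<^sub>1 + Xi\<^sub>j x\<^sub>j\<close>, so in the eigenbasis of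
  \<open>A\<close> every coordinate solves a scalar recurrence with characteristic polynomial
  \<open>x\<^sup>2 - lambda\<^sub>i x + beta\<close>. For the bottom eigenvalues, \<open>\<bar>lambda\<^sub>i\<bar> \<le> 2 sqrt beta\<close>, the roots are
  complex of modulus \<open>sqrt beta\<close> and the coordinates are bounded through scaled Chebyshev
  polynomials. For the top eigenvalues, \<open>lambda\<^sub>i \<ge> lambda\<^sub>k\<close>, the norm of the top block dominates a
  comparison sequence \<open>p mu\<^sup>j + q nu\<^sup>j\<close> whose rate \<open>mu\<close> is at least
  \<open>(1 - c) lambda\<^sub>k\<^sup>+ + c sqrt beta\<close>; the perturbation bounds with \<open>c = 1/32\<close> are what this comparison
  absorbs. Dividing the two estimates bounds the bottom part of \<open>z\<^sub>t = X\<^sub>t R\<^sub>t v\<close> by \<open>K\<^sub>t\<close> times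
  its top part, which is \<open>tan theta\<^sub>t \<le> K\<^sub>t\<close> once \<open>R\<^sub>t v\<close> ranges over all of \<open>\<real>\<^sup>k\<close>. Positivity of
  the top part is also what makes \<open>R\<^sub>t\<close> invertible and \<open>cos theta\<^sub>t > 0\<close>, so the argument runs
  as an induction over \<open>t\<close>.\<close>

section \<open>Scaled Chebyshev polynomials and three-term recurrences\<close>

text \<open>Scaled Chebyshev polynomials of the first and second kind: for \<open>l = 2 sqrt b cos \<phi>\<close>,
  \<open>cheb_T l b n = b\<^sup>n\<^sup>/\<^sup>2 cos (n \<phi>)\<close> and \<open>cheb_U l b n = b\<^sup>n\<^sup>/\<^sup>2 sin ((n + 1) \<phi>) / sin \<phi>\<close>.\<close>

fun cheb_T :: "real \<Rightarrow> real \<Rightarrow> nat \<Rightarrow> real" where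
  "cheb_T l b 0 = 1"
| "cheb_T l b (Suc 0) = l / 2"
| "cheb_T l b (Suc (Suc n)) = l * cheb_T l b (Suc n) - b * cheb_T l b n"

fun cheb_U :: "real \<Rightarrow> real \<Rightarrow> nat \<Rightarrow> real" where
  "cheb_U l b 0 = 1"
| "cheb_U l b (Suc 0) = l"
| "cheb_U l b (Suc (Suc n)) = l * cheb_U l b (Suc n) - b * cheb_U l b n"

lemma ex_conj_roots:
  fixes l b :: real
  assumes "l\<^sup>2 \<le> 4 * b"
  obtains r :: complex where "r + cnj r = of_real l" "r * cnj r = of_real b" "cmod r = sqrt b"
proof
  define r where "r = Complex (l/2) (sqrt (b - l\<^sup>2/4))"
  have h: "sqrt (b - l\<^sup>2/4) ^ 2 = b - l\<^sup>2/4" using assms by simp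
  show "r + cnj r = of_real l" unfolding r_def by (simp add: complex_eq_iff)
  show "r * cnj r = of_real b" unfolding r_def using h by (simp add: complex_eq_iff power2_eq_square)
  show "cmod r = sqrt b" unfolding r_def cmod_def using h by (simp add: power_divide)
qed

lemma cheb_U_eq_sum:
  fixes r :: complex
  assumes "r + cnj r = of_real l" "r * cnj r = of_real b"
  shows "of_real (cheb_U l b n) = (\<Sum>i\<le>n. r ^ i * cnj r ^ (n - i))"
proof -
  define S where "S n = (\<Sum>i\<le>n. r ^ i * cnj r ^ (n - i))" for n
  have S_Suc: "S (Suc n) = r * S n + cnj r ^ Suc n" for n
  proof -
    have "S (Suc n) = cnj r ^ Suc n + (\<Sum>i\<le>n. r ^ Suc i * cnj r ^ (Suc n - Suc i))"
      unfolding S_def by (subst sum.atMost_Suc_shift) simp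
    also have "\<dots> = r * S n + cnj r ^ Suc n"
      unfolding S_def by (simp add: sum_distrib_left mult.assoc)
    finally show ?thesis .
  qed
  have S_Suc_Suc: "S (Suc (Suc n)) = (r + cnj r) * S (Suc n) - r * cnj r * S n" for n
    using S_Suc[of "Suc n"] S_Suc[of n] by (simp add: algebra_simps)
  have "of_real (cheb_U l b n) = S n \<and> of_real (cheb_U l b (Suc n)) = S (Suc n)"
  proof (induction n)
    case 0
    then show ?case using S_Suc[of 0] assms by (simp add: S_def)
  next
    case (Suc n)
    then show ?case using S_Suc_Suc[of n] assms by simp
  qed
  then show ?thesis by (simp add: S_def)
qed

lemma cheb_T_eq_sum:
  fixes r :: complex
  assumes "r + cnj r = of_real l" "r * cnj r = of_real b"
  shows "of_real (cheb_T l b n) = (r ^ n + cnj r ^ n) / 2"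
proof -
  have "of_real (cheb_T l b n) = (r ^ n + cnj r ^ n) / 2 \<and>
        of_real (cheb_T l b (Suc n)) = (r ^ Suc n + cnj r ^ Suc n) / 2"
  proof (induction n)
    case 0
    then show ?case using assms by simp
  next
    case (Suc n)
    have "of_real (cheb_T l b (Suc (Suc n)))
        = of_real l * of_real (cheb_T l b (Suc n)) - of_real b * of_real (cheb_T l b n)"
      by simp
    also have "\<dots> = (r + cnj r) * ((r ^ Suc n + cnj r ^ Suc n) / 2) - r * cnj r * ((r ^ n + cnj r ^ n) / 2)"
      using Suc.IH by (simp only: assms)
    also have "\<dots> = (r ^ Suc (Suc n) + cnj r ^ Suc (Suc n)) / 2"
      by (simp add: algebra_simps)
    finally show ?case using Suc.IH by blast
  qed
  then show ?thesis by simp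
qed

lemma abs_cheb_U_le:
  assumes "l\<^sup>2 \<le> 4 * b"
  shows "\<bar>cheb_U l b n\<bar> \<le> (real n + 1) * sqrt b ^ n"
proof -
  obtain r where r: "r + cnj r = of_real l" "r * cnj r = of_real b" "cmod r = sqrt b"
    using ex_conj_roots[OF assms] .
  have "\<bar>cheb_U l b n\<bar> = cmod (\<Sum>i\<le>n. r ^ i * cnj r ^ (n - i))"
    by (simp flip: cheb_U_eq_sum[OF r(1,2)])
  also have "\<dots> \<le> (\<Sum>i\<le>n. cmod (r ^ i * cnj r ^ (n - i)))"
    by (rule norm_sum)
  also have "\<dots> = (\<Sum>i\<le>n. sqrt b ^ n)"
    by (intro sum.cong refl) (simp add: norm_mult norm_power r(3) flip: power_add)
  also have "\<dots> = (real n + 1) * sqrt b ^ n"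
    by simp
  finally show ?thesis .
qed

lemma abs_cheb_T_le:
  assumes "l\<^sup>2 \<le> 4 * b"
  shows "\<bar>cheb_T l b n\<bar> \<le> sqrt b ^ n"
proof -
  obtain r where r: "r + cnj r = of_real l" "r * cnj r = of_real b" "cmod r = sqrt b"
    using ex_conj_roots[OF assms] .
  have "\<bar>cheb_T l b n\<bar> = cmod ((r ^ n + cnj r ^ n) / 2)"
    by (simp flip: cheb_T_eq_sum[OF r(1,2)])
  also have "\<dots> \<le> (cmod (r ^ n) + cmod (cnj r ^ n)) / 2"
    by (simp add: norm_divide divide_right_mono norm_triangle_ineq)
  also have "\<dots> = sqrt b ^ n"
    by (simp add: norm_power r(3))
  finally show ?thesis .
qed

lemma cheb_U_convolution_Suc_Suc:
  "(\<Sum>m<Suc (Suc n). cheb_U l b (Suc n - m) * f m)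
     = l * (\<Sum>m<Suc n. cheb_U l b (n - m) * f m) - b * (\<Sum>m<n. cheb_U l b (n - 1 - m) * f m)
       + f (Suc n)"
proof -
  have "(\<Sum>m<n. cheb_U l b (Suc n - m) * f m)
      = (\<Sum>m<n. l * (cheb_U l b (n - m) * f m) - b * (cheb_U l b (n - 1 - m) * f m))"
  proof (intro sum.cong refl)
    fix m assume "m \<in> {..<n}"
    then have "Suc n - m = Suc (Suc (n - 1 - m))" "n - m = Suc (n - 1 - m)" by auto
    then show "cheb_U l b (Suc n - m) * f m
        = l * (cheb_U l b (n - m) * f m) - b * (cheb_U l b (n - 1 - m) * f m)"
      by (simp add: algebra_simps)
  qed
  then show ?thesis
    by (simp add: sum_subtractf sum_distrib_left algebra_simps)
qed

lemma three_term_solution: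
  fixes c f :: "nat \<Rightarrow> real"
  assumes c1: "c 1 = l / 2 * c 0 + f 0"
    and rec: "\<And>j. 1 \<le> j \<Longrightarrow> j < t \<Longrightarrow> c (Suc j) = l * c j - b * c (j - 1) + f j"
    and "n \<le> t"
  shows "c n = cheb_T l b n * c 0 + (\<Sum>m<n. cheb_U l b (n - 1 - m) * f m)"
  using \<open>n \<le> t\<close>
proof (induction n rule: less_induct)
  case (less n)
  consider "n = 0" | "n = 1" | m where "n = Suc (Suc m)"
    by (metis One_nat_def not0_implies_Suc)
  then show ?case
  proof cases
    case 3
    have "c n = l * c (Suc m) - b * c m + f (Suc m)"
      using rec[of "Suc m"] less.prems 3 by simp
    also have "\<dots> = l * (cheb_T l b (Suc m) * c 0 + (\<Sum>i<Suc m. cheb_U l b (m - i) * f i))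
        - b * (cheb_T l b m * c 0 + (\<Sum>i<m. cheb_U l b (m - 1 - i) * f i)) + f (Suc m)"
      using less.IH[of m] less.IH[of "Suc m"] less.prems 3 by simp
    also have "\<dots> = cheb_T l b n * c 0 + (\<Sum>i<n. cheb_U l b (n - 1 - i) * f i)"
      using cheb_U_convolution_Suc_Suc[of l b m f] unfolding 3 by (simp add: algebra_simps)
    finally show ?thesis .
  qed (use c1 in simp_all)
qed

lemma three_term_abs_le:
  fixes c f :: "nat \<Rightarrow> real"
  assumes c1: "c 1 = l / 2 * c 0 + f 0"
    and rec: "\<And>j. 1 \<le> j \<Longrightarrow> j < t \<Longrightarrow> c (Suc j) = l * c j - b * c (j - 1) + f j"
    and l: "l\<^sup>2 \<le> 4 * b"
  shows "\<bar>c t\<bar> \<le> sqrt b ^ t * \<bar>c 0\<bar> + (\<Sum>m<t. real (t - m) * sqrt b ^ (t - 1 - m) * \<bar>f m\<bar>)"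
proof -
  have "c t = cheb_T l b t * c 0 + (\<Sum>m<t. cheb_U l b (t - 1 - m) * f m)"
    by (rule three_term_solution[OF c1 rec]) auto
  then have "\<bar>c t\<bar> \<le> \<bar>cheb_T l b t * c 0\<bar> + \<bar>\<Sum>m<t. cheb_U l b (t - 1 - m) * f m\<bar>"
    by (simp add: abs_triangle_ineq)
  also have "\<dots> \<le> \<bar>cheb_T l b t * c 0\<bar> + (\<Sum>m<t. \<bar>cheb_U l b (t - 1 - m) * f m\<bar>)"
    by (simp add: sum_abs)
  also have "\<dots> \<le> sqrt b ^ t * \<bar>c 0\<bar> + (\<Sum>m<t. real (t - m) * sqrt b ^ (t - 1 - m) * \<bar>f m\<bar>)"
  proof (intro add_mono sum_mono)
    show "\<bar>cheb_T l b t * c 0\<bar> \<le> sqrt b ^ t * \<bar>c 0\<bar>"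
      by (simp add: abs_mult mult_right_mono abs_cheb_T_le[OF l])
    fix m assume "m \<in> {..<t}"
    then have "real (t - 1 - m) + 1 = real (t - m)" by auto
    then show "\<bar>cheb_U l b (t - 1 - m) * f m\<bar> \<le> real (t - m) * sqrt b ^ (t - 1 - m) * \<bar>f m\<bar>"
      using abs_cheb_U_le[OF l, of "t - 1 - m"] by (simp add: abs_mult mult_right_mono)
  qed
  finally show ?thesis .
qed

lemma L2_set_abs [simp]: "L2_set (\<lambda>i. \<bar>f i\<bar>) A = L2_set f A"
  unfolding L2_set_def by simp

lemma L2_set_mono_abs:
  assumes "\<And>i. i \<in> A \<Longrightarrow> \<bar>f i\<bar> \<le> g i"
  shows "L2_set f A \<le> L2_set g A"
  using L2_set_mono[of A "\<lambda>i. \<bar>f i\<bar>" g] assms by simp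

lemma L2_set_const_mult: "L2_set (\<lambda>i. c * f i) A = \<bar>c\<bar> * L2_set f A"
proof -
  have "L2_set (\<lambda>i. c * f i) A = L2_set (\<lambda>i. \<bar>c\<bar> * \<bar>f i\<bar>) A"
    using L2_set_abs[of "\<lambda>i. c * f i" A] by (simp add: abs_mult)
  then show ?thesis
    using L2_set_right_distrib[of "\<bar>c\<bar>" "\<lambda>i. \<bar>f i\<bar>" A] by simp
qed

lemma L2_set_sum_le:
  assumes "finite S"
  shows "L2_set (\<lambda>i. \<Sum>m\<in>S. g m i) A \<le> (\<Sum>m\<in>S. L2_set (g m) A)"
  using assms
proof (induction S rule: finite_induct)
  case (insert x F)
  then have "L2_set (\<lambda>i. \<Sum>m\<in>insert x F. g m i) A \<le> L2_set (g x) A + L2_set (\<lambda>i. \<Sum>m\<in>F. g m i) A"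
    using L2_set_triangle_ineq[of "g x" "\<lambda>i. \<Sum>m\<in>F. g m i" A] by simp
  with insert show ?case by simp
qed (simp add: L2_set_0')

lemma L2_set_reverse_triangle: "L2_set f A - L2_set g A \<le> L2_set (\<lambda>i. f i + g i) A"
  using L2_set_triangle_ineq[of "\<lambda>i. f i + g i" "\<lambda>i. - g i" A]
    L2_set_const_mult[of "-1" g A] by simp

lemma L2_set_mult_lower:
  assumes "0 \<le> c" "\<And>i. i \<in> A \<Longrightarrow> c \<le> lam i"
  shows "c * L2_set f A \<le> L2_set (\<lambda>i. lam i * f i) A"
proof -
  have "c * L2_set f A = L2_set (\<lambda>i. c * f i) A"
    using assms(1) by (simp add: L2_set_const_mult)
  also have "\<dots> \<le> L2_set (\<lambda>i. \<bar>lam i * f i\<bar>) A"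
    by (rule L2_set_mono_abs) (use assms in \<open>force simp: abs_mult intro: mult_right_mono\<close>)
  finally show ?thesis by simp
qed

lemma L2_set_bottom_block_le:
  fixes C M :: "nat \<Rightarrow> nat \<Rightarrow> real"
  assumes b: "0 \<le> b" and lam: "\<And>i. i \<in> J \<Longrightarrow> \<bar>lam i\<bar> \<le> 2 * sqrt b"
    and c1: "\<And>i. i \<in> J \<Longrightarrow> C 1 i = lam i / 2 * C 0 i + M 0 i"
    and rec: "\<And>i j. i \<in> J \<Longrightarrow> 1 \<le> j \<Longrightarrow> j < t \<Longrightarrow>
                C (Suc j) i = lam i * C j i - b * C (j - 1) i + M j i"
  shows "L2_set (C t) J \<le> sqrt b ^ t * L2_set (C 0) J
           + (\<Sum>m<t. real (t - m) * sqrt b ^ (t - 1 - m) * L2_set (M m) J)"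
proof -
  have "L2_set (C t) J \<le> L2_set (\<lambda>i. sqrt b ^ t * \<bar>C 0 i\<bar>
          + (\<Sum>m<t. real (t - m) * sqrt b ^ (t - 1 - m) * \<bar>M m i\<bar>)) J"
  proof (rule L2_set_mono_abs)
    fix i assume i: "i \<in> J"
    have "(lam i)\<^sup>2 \<le> (2 * sqrt b)\<^sup>2"
      using power_mono[OF lam[OF i], of 2] by simp
    then have "(lam i)\<^sup>2 \<le> 4 * b" using b by (simp add: power_mult_distrib)
    then show "\<bar>C t i\<bar> \<le> sqrt b ^ t * \<bar>C 0 i\<bar>
        + (\<Sum>m<t. real (t - m) * sqrt b ^ (t - 1 - m) * \<bar>M m i\<bar>)"
      by (intro three_term_abs_le[of "\<lambda>j. C j i" "lam i" "\<lambda>j. M j i"]) (use i c1 rec in auto)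
  qed
  also have "\<dots> \<le> L2_set (\<lambda>i. sqrt b ^ t * \<bar>C 0 i\<bar>) J
      + (\<Sum>m<t. L2_set (\<lambda>i. real (t - m) * sqrt b ^ (t - 1 - m) * \<bar>M m i\<bar>) J)"
    by (intro order.trans[OF L2_set_triangle_ineq] add_left_mono L2_set_sum_le) simp
  also have "\<dots> = sqrt b ^ t * L2_set (C 0) J
      + (\<Sum>m<t. real (t - m) * sqrt b ^ (t - 1 - m) * L2_set (M m) J)"
    using b by (simp add: L2_set_const_mult abs_mult)
  finally show ?thesis .
qed

context
  fixes L b e :: real and lam w :: "nat \<Rightarrow> real" and C M :: "nat \<Rightarrow> nat \<Rightarrow> real"
    and I :: "nat set" and t :: nat
  assumes L: "0 \<le> L" and lam: "\<And>i. i \<in> I \<Longrightarrow> L \<le> lam i" and b: "0 \<le> b"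
    and c1: "\<And>i. i \<in> I \<Longrightarrow> C 1 i = lam i / 2 * C 0 i + M 0 i"
    and rec: "\<And>i j. i \<in> I \<Longrightarrow> 1 \<le> j \<Longrightarrow> j < t \<Longrightarrow>
                C (Suc j) i = lam i * C j i - b * C (j - 1) i + M j i"
    and noise: "\<And>j. j < t \<Longrightarrow> L2_set (M j) I \<le> e * L2_set (C j) I"
    and w_pos: "\<And>j. 0 < w j"
    and w_1: "w 1 = (L / 2 - e) * w 0"
    and w_rec: "\<And>j. w (Suc (Suc j)) = (L - e) * w (Suc j) - b * w j"
begin

text \<open>The weights \<open>w\<close> solve the worst case of the recurrence for the norms of the top block,
  so the ratio \<open>L2_set (C j) I / w j\<close> cannot decrease.\<close>

lemma L2_set_three_term_step:
  "j < t \<Longrightarrow> w (Suc j) * L2_set (C j) I \<le> w j * L2_set (C (Suc j)) I"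
proof (induction j)
  case 0
  have "L / 2 * L2_set (C 0) I - L2_set (M 0) I \<le> L2_set (\<lambda>i. lam i / 2 * C 0 i + M 0 i) I"
    using L2_set_mult_lower[of "L / 2" I "\<lambda>i. lam i / 2" "C 0"] L lam
      L2_set_reverse_triangle[of "\<lambda>i. lam i / 2 * C 0 i" I "M 0"] by force
  also have "\<dots> = L2_set (C 1) I"
    by (rule L2_set_cong) (auto simp: c1[unfolded One_nat_def])
  finally have "(L / 2 - e) * L2_set (C 0) I \<le> L2_set (C 1) I"
    using noise[of 0] 0 by (simp add: algebra_simps)
  then show ?case
    using w_1 w_pos[of 0] by (simp add: mult.left_commute mult_left_mono)
next
  case (Suc j)
  then have IH: "w (Suc j) * L2_set (C j) I \<le> w j * L2_set (C (Suc j)) I" by simp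
  have "L2_set (\<lambda>i. - b * C j i + M (Suc j) i) I \<le> b * L2_set (C j) I + e * L2_set (C (Suc j)) I"
    using L2_set_triangle_ineq[of "\<lambda>i. - b * C j i" "M (Suc j)" I] noise[of "Suc j"] Suc.prems b
      L2_set_const_mult[of "- b" "C j" I]
    by simp
  moreover have "L2_set (C (Suc (Suc j))) I
      = L2_set (\<lambda>i. lam i * C (Suc j) i + (- b * C j i + M (Suc j) i)) I"
    by (rule L2_set_cong) (use rec[of _ "Suc j"] Suc.prems in auto)
  then have "L * L2_set (C (Suc j)) I - L2_set (\<lambda>i. - b * C j i + M (Suc j) i) I
      \<le> L2_set (C (Suc (Suc j))) I"
    using L2_set_mult_lower[of L I lam "C (Suc j)"] L lam
      L2_set_reverse_triangle[of "\<lambda>i. lam i * C (Suc j) i" I "\<lambda>i. - b * C j i + M (Suc j) i"]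
    by force
  ultimately have step: "(L - e) * L2_set (C (Suc j)) I - b * L2_set (C j) I \<le> L2_set (C (Suc (Suc j))) I"
    by (simp add: algebra_simps)
  have "w (Suc (Suc j)) * L2_set (C (Suc j)) I
      = (L - e) * w (Suc j) * L2_set (C (Suc j)) I - b * w j * L2_set (C (Suc j)) I"
    unfolding w_rec by (simp add: algebra_simps)
  also have "\<dots> \<le> w (Suc j) * ((L - e) * L2_set (C (Suc j)) I - b * L2_set (C j) I)"
    using mult_left_mono[OF IH b] by (simp add: algebra_simps)
  also have "\<dots> \<le> w (Suc j) * L2_set (C (Suc (Suc j))) I"
    using step w_pos[of "Suc j"] by (simp add: mult_left_mono)
  finally show ?case .
qed

lemma L2_set_three_term_growth:
  assumes "r \<le> n" "n \<le> t"
  shows "w n * L2_set (C r) I \<le> w r * L2_set (C n) I"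
  using assms
proof (induction n rule: dec_induct)
  case (step n)
  have "w n * (w (Suc n) * L2_set (C r) I) \<le> w (Suc n) * (w r * L2_set (C n) I)"
    using step w_pos[of "Suc n"] by (simp add: mult.left_commute mult_left_mono)
  also have "\<dots> \<le> w r * (w n * L2_set (C (Suc n)) I)"
    using L2_set_three_term_step[of n] step w_pos[of r] by (simp add: mult.left_commute mult_left_mono)
  finally show ?case
    using w_pos[of n] by (simp add: mult.left_commute)
qed simp

end

section \<open>Growth of the top block and the combined estimate\<close>

definition anpm_rate :: "real \<Rightarrow> real \<Rightarrow> real" where
  "anpm_rate L b = sqrt b / ((1 - 1/32) * ((L + sqrt (L\<^sup>2 - 4 * b)) / 2) + 1/32 * sqrt b)"

definition anpm_tan_bound :: "real \<Rightarrow> real \<Rightarrow> real \<Rightarrow> (nat \<Rightarrow> real) \<Rightarrow> nat \<Rightarrow> real" where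
  "anpm_tan_bound L b eps h t = (31/15) * anpm_rate L b ^ t * h 0
     + (2/15) * ((L - 2 * sqrt b) / L) * eps
       * (\<Sum>s<t. (real s + 1) * anpm_rate L b ^ s * (1 + h (t - 1 - s)))"

lemma anpm_rate_bounds:
  assumes "0 < b" "2 * sqrt b < L"
  shows "0 < anpm_rate L b" "anpm_rate L b < 1"
proof -
  define r where "r = sqrt (L\<^sup>2 - 4 * b)"
  have "(2 * sqrt b)\<^sup>2 \<le> L\<^sup>2"
    using assms by (intro power_mono) auto
  then have "0 \<le> r"
    using assms(1) by (simp add: r_def power_mult_distrib)
  define D where "D = (1 - 1/32) * ((L + r) / 2) + 1/32 * sqrt b"
  have "sqrt b < D"
    unfolding D_def using \<open>0 \<le> r\<close> assms by (simp add: field_simps)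
  moreover have "0 < sqrt b"
    using assms(1) by simp
  ultimately have "0 < D" by linarith
  have rate: "anpm_rate L b = sqrt b / D"
    unfolding anpm_rate_def r_def D_def ..
  show "0 < anpm_rate L b"
    unfolding rate using \<open>0 < D\<close> \<open>0 < sqrt b\<close> by (rule divide_pos_pos[rotated])
  show "anpm_rate L b < 1"
    unfolding rate divide_less_eq_1_pos[OF \<open>0 < D\<close>] by fact
qed

lemma anpm_tan_bound_nonneg:
  assumes "0 < b" "2 * sqrt b < L" "0 \<le> eps" "\<And>j. 0 \<le> h j"
  shows "0 \<le> anpm_tan_bound L b eps h t"
proof -
  have "0 < L" using assms(1,2) by (smt (verit) real_sqrt_ge_zero)
  then show ?thesis
    unfolding anpm_tan_bound_def using anpm_rate_bounds[OF assms(1,2)] assms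
    by (intro add_nonneg_nonneg mult_nonneg_nonneg sum_nonneg) auto
qed

lemma two_root_weights:
  fixes mu nu p q :: real
  assumes "0 \<le> nu" "nu \<le> mu" "0 < p" "0 \<le> q" "p + q = 1"
  defines "w \<equiv> \<lambda>j. p * mu ^ j + q * nu ^ j"
  shows "w (Suc (Suc j)) = (mu + nu) * w (Suc j) - mu * nu * w j"
    and "p * mu ^ j \<le> w j" and "w j \<le> mu ^ j" and "0 < mu \<Longrightarrow> 0 < w j"
proof -
  show "w (Suc (Suc j)) = (mu + nu) * w (Suc j) - mu * nu * w j"
    unfolding w_def by (simp add: algebra_simps)
  show lower: "p * mu ^ j \<le> w j"
    unfolding w_def using assms by simp
  have "q * nu ^ j \<le> q * mu ^ j"
    using assms by (simp add: power_mono mult_left_mono)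
  then show "w j \<le> mu ^ j"
    unfolding w_def using \<open>p + q = 1\<close> by (metis add_left_mono distrib_right mult_1)
  show "0 < mu \<Longrightarrow> 0 < w j"
    using lower assms(3) by (smt (verit) mult_pos_pos zero_less_power)
qed

lemma shifted_discriminant_bounds:
  fixes L b :: real
  assumes b: "0 < b" and L: "2 * sqrt b < L"
  defines "a \<equiv> L - (L - 2 * sqrt b) / 32"
  shows "0 < a\<^sup>2 - 4 * b" "0 \<le> L\<^sup>2 - 4 * b" "sqrt (a\<^sup>2 - 4 * b) < a"
    and "(31/32) * (L - 2 * sqrt b) \<le> sqrt (a\<^sup>2 - 4 * b)"
    and "(31/32) * sqrt (L\<^sup>2 - 4 * b) \<le> sqrt (a\<^sup>2 - 4 * b)"
proof -
  define g where "g = L - 2 * sqrt b"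
  define s where "s = sqrt (a\<^sup>2 - 4 * b)"
  define r where "r = sqrt (L\<^sup>2 - 4 * b)"
  have sb: "0 < sqrt b" "(sqrt b)\<^sup>2 = b" using b by simp_all
  have g: "0 < g" using L g_def by simp
  have a: "a = (31/32) * L + sqrt b / 16" by (simp add: a_def field_simps)
  have disc_a: "a\<^sup>2 - 4 * b = (31/32) * g * (a + 2 * sqrt b)"
    using sb by (simp add: a g_def power2_eq_square field_simps)
  have disc_L: "L\<^sup>2 - 4 * b = g * (L + 2 * sqrt b)"
    using sb by (simp add: g_def power2_eq_square algebra_simps)
  have "0 < a + 2 * sqrt b" unfolding a using sb L by linarith
  then have "0 < (31/32) * g * (a + 2 * sqrt b)" using g by simp
  then show disc_a_pos: "0 < a\<^sup>2 - 4 * b" by (simp only: disc_a)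
  then have s2: "s\<^sup>2 = a\<^sup>2 - 4 * b" and s: "0 < s" by (simp_all add: s_def)
  have "a - 2 * sqrt b = (31/32) * g" by (simp add: a g_def)
  then have "(31/32) * g \<le> a + 2 * sqrt b" using sb by linarith
  then have "((31/32) * g)\<^sup>2 \<le> (31/32) * g * (a + 2 * sqrt b)"
    unfolding power2_eq_square using g by (intro mult_left_mono) auto
  then have "((31/32) * g)\<^sup>2 \<le> s\<^sup>2" using s2 disc_a by linarith
  then show "(31/32) * (L - 2 * sqrt b) \<le> s"
    unfolding g_def[symmetric] by (rule power2_le_imp_le) (use s in simp)
  show disc_L_nonneg: "0 \<le> L\<^sup>2 - 4 * b"
    unfolding disc_L using g sb L by (intro mult_nonneg_nonneg; linarith)
  then have r2: "r\<^sup>2 = g * (L + 2 * sqrt b)" unfolding r_def disc_L[symmetric] by simp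
  have "(31/32) * (L + 2 * sqrt b) \<le> a + 2 * sqrt b" unfolding a distrib_left using sb by linarith
  then have "(31/32) * g * ((31/32) * (L + 2 * sqrt b)) \<le> (31/32) * g * (a + 2 * sqrt b)"
    using g by (intro mult_left_mono) auto
  moreover have "((31/32) * r)\<^sup>2 = (31/32) * g * ((31/32) * (L + 2 * sqrt b))"
    unfolding power_mult_distrib r2 by (simp add: power2_eq_square mult_ac)
  ultimately have "((31/32) * r)\<^sup>2 \<le> s\<^sup>2" using s2 disc_a by linarith
  then show "(31/32) * r \<le> s" by (rule power2_le_imp_le) (use s in simp)
  have "s\<^sup>2 < a\<^sup>2" using s2 b by simp
  moreover have "0 < a" unfolding a using sb L by linarith
  ultimately show "s < a" using power_less_imp_less_base[of s 2 a] by simp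
qed

text \<open>The roots \<open>mu \<ge> nu\<close> of \<open>x\<^sup>2 = (L - e) x - b\<close> and the weights \<open>p, q\<close> making
  \<open>p mu\<^sup>j + q nu\<^sup>j\<close> start like the top block.\<close>

lemma comparison_roots_exist:
  fixes L b :: real
  assumes b: "0 < b" and L: "2 * sqrt b < L"
  defines "e \<equiv> (L - 2 * sqrt b) / 32"
  obtains mu nu p q where "0 \<le> nu" "nu \<le> mu" "15/31 \<le> p" "0 \<le> q" "p + q = 1"
    "mu + nu = L - e" "mu * nu = b" "p * mu + q * nu = L / 2 - e"
    "sqrt b / mu \<le> anpm_rate L b" "31 * L \<le> 64 * mu"
proof -
  define a where "a = L - e"
  define s where "s = sqrt (a\<^sup>2 - 4 * b)"
  define r where "r = sqrt (L\<^sup>2 - 4 * b)"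
  note disc = shifted_discriminant_bounds[OF b L, folded e_def a_def, folded s_def r_def]
  have sb: "0 < sqrt b" using b by simp
  have s: "0 < s" and s2: "s\<^sup>2 = a\<^sup>2 - 4 * b" using disc(1) by (simp_all add: s_def)
  have a: "a = (31/32) * L + sqrt b / 16" by (simp add: a_def e_def field_simps)
  define mu nu p q where "mu = (a + s) / 2" and "nu = (a - s) / 2"
    and "p = (s - e) / (2 * s)" and "q = (s + e) / (2 * s)"
  have "0 \<le> nu" "nu \<le> mu" "mu + nu = L - e"
    using s disc(3) by (simp_all add: mu_def nu_def a_def field_simps)
  moreover have "15/31 \<le> p" using s disc(4) by (simp add: p_def e_def field_simps)
  moreover have "0 \<le> q" using s L by (simp add: q_def e_def)
  moreover have "p + q = 1" using s by (simp add: p_def q_def field_simps)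
  moreover have "mu * nu = b" using s2 by (simp add: mu_def nu_def field_simps power2_eq_square)
  moreover have "p * mu + q * nu = L / 2 - e"
    using s by (simp add: mu_def nu_def p_def q_def a_def field_simps)
  moreover have "sqrt b / mu \<le> anpm_rate L b"
  proof -
    define rho where "rho = (1 - 1/32) * ((L + r) / 2) + 1/32 * sqrt b"
    have "rho \<le> mu"
      unfolding rho_def mu_def using disc(5) by (simp add: a)
    moreover have "0 \<le> r" unfolding r_def using disc(2) by simp
    then have "0 < rho" unfolding rho_def using sb L by argo
    ultimately show ?thesis
      unfolding anpm_rate_def r_def[symmetric] rho_def[symmetric] using sb
      by (intro divide_left_mono) auto
  qed
  moreover have "31 * L \<le> 64 * mu" using s sb by (simp add: mu_def a)
  ultimately show ?thesis using that by blast
qed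

lemma L2_set_top_block_growth:
  fixes C M :: "nat \<Rightarrow> nat \<Rightarrow> real" and lam :: "nat \<Rightarrow> real"
  assumes b: "0 < b" and L: "2 * sqrt b < L"
    and lam: "\<And>i. i \<in> I \<Longrightarrow> L \<le> lam i"
    and c1: "\<And>i. i \<in> I \<Longrightarrow> C 1 i = lam i / 2 * C 0 i + M 0 i"
    and rec: "\<And>i j. i \<in> I \<Longrightarrow> 1 \<le> j \<Longrightarrow> j < t \<Longrightarrow>
                C (Suc j) i = lam i * C j i - b * C (j - 1) i + M j i"
    and noise: "\<And>j. j < t \<Longrightarrow> L2_set (M j) I \<le> (L - 2 * sqrt b) / 32 * L2_set (C j) I"
  obtains mu where "0 < mu" "sqrt b / mu \<le> anpm_rate L b" "31 * L \<le> 64 * mu"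
    "\<And>r. r \<le> t \<Longrightarrow> 15 * (mu ^ (t - r) * L2_set (C r) I) \<le> 31 * L2_set (C t) I"
proof -
  define e where "e = (L - 2 * sqrt b) / 32"
  obtain mu nu p q where roots: "0 \<le> nu" "nu \<le> mu" "15/31 \<le> p" "0 \<le> q" "p + q = 1"
      "mu + nu = L - e" "mu * nu = b" "p * mu + q * nu = L / 2 - e"
    and rate: "sqrt b / mu \<le> anpm_rate L b" and mu_L: "31 * L \<le> 64 * mu"
    by (rule comparison_roots_exist[OF b L, folded e_def])
  have L_pos: "0 < L" using L real_sqrt_gt_zero[OF b] by linarith
  then have mu: "0 < mu" using mu_L by linarith
  have p: "0 < p" using roots(3) by linarith
  define w where "w = (\<lambda>j. p * mu ^ j + q * nu ^ j)"
  note W = two_root_weights[OF roots(1,2) p roots(4,5)]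
  have w_pos: "0 < w j" for j using W(4)[OF mu] by (simp add: w_def)
  have w_1: "w 1 = (L / 2 - e) * w 0" using roots(5,8) by (simp add: w_def)
  have w_rec: "w (Suc (Suc j)) = (L - e) * w (Suc j) - b * w j" for j
    using W(1)[of j] roots(6,7) by (simp add: w_def)
  show thesis
  proof (rule that[OF mu rate mu_L])
    fix r assume r: "r \<le> t"
    have "mu ^ r * (p * (mu ^ (t - r) * L2_set (C r) I)) = p * mu ^ t * L2_set (C r) I"
      using r by (simp add: mult_ac flip: power_add)
    also have "\<dots> \<le> w t * L2_set (C r) I"
      using W(2)[of t] by (simp add: w_def mult_right_mono)
    also have "\<dots> \<le> w r * L2_set (C t) I"
      using L2_set_three_term_growth[OF _ lam _ c1 rec noise[folded e_def] w_pos w_1 w_rec r]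
        L_pos b by simp
    also have "\<dots> \<le> mu ^ r * L2_set (C t) I"
      using W(3)[of r] by (simp add: w_def mult_right_mono)
    finally have "p * (mu ^ (t - r) * L2_set (C r) I) \<le> L2_set (C t) I"
      using mu by simp
    moreover have "15 * (mu ^ (t - r) * L2_set (C r) I) \<le> 31 * (p * (mu ^ (t - r) * L2_set (C r) I))"
      using mult_right_mono[of 15 "31 * p" "mu ^ (t - r) * L2_set (C r) I"] roots(3) mu
      by (simp add: mult.assoc)
    ultimately show "15 * (mu ^ (t - r) * L2_set (C r) I) \<le> 31 * L2_set (C t) I"
      by linarith
  qed
qed

lemma L2_set_top_block_pos:
  fixes C M :: "nat \<Rightarrow> nat \<Rightarrow> real" and lam :: "nat \<Rightarrow> real"
  assumes b: "0 < b" and L: "2 * sqrt b < L"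
    and lam: "\<And>i. i \<in> I \<Longrightarrow> L \<le> lam i"
    and c1: "\<And>i. i \<in> I \<Longrightarrow> C 1 i = lam i / 2 * C 0 i + M 0 i"
    and rec: "\<And>i j. i \<in> I \<Longrightarrow> 1 \<le> j \<Longrightarrow> j < t \<Longrightarrow>
                C (Suc j) i = lam i * C j i - b * C (j - 1) i + M j i"
    and noise: "\<And>j. j < t \<Longrightarrow> L2_set (M j) I \<le> (L - 2 * sqrt b) / 32 * L2_set (C j) I"
    and pos: "0 < L2_set (C 0) I"
  shows "0 < L2_set (C t) I"
proof -
  obtain mu where mu: "0 < mu" "sqrt b / mu \<le> anpm_rate L b" "31 * L \<le> 64 * mu"
    and growth: "\<And>r. r \<le> t \<Longrightarrow> 15 * (mu ^ (t - r) * L2_set (C r) I) \<le> 31 * L2_set (C t) I"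
    using L2_set_top_block_growth[OF b L lam c1 rec noise] by blast
  have "0 < 15 * (mu ^ t * L2_set (C 0) I)" using mu(1) pos by simp
  with growth[of 0] show ?thesis by simp
qed

lemma power_le_by_growth:
  fixes s mu g x y :: real
  assumes mu: "0 < mu" and s: "0 \<le> s" "s / mu \<le> g" and x: "0 \<le> x"
    and growth: "15 * (mu ^ n * x) \<le> 31 * y"
  shows "s ^ n * x \<le> 31/15 * g ^ n * y"
proof -
  have "s ^ n * x = (s / mu) ^ n * (mu ^ n * x)"
    using mu by (simp add: power_divide)
  also have "\<dots> \<le> g ^ n * (31/15 * y)"
  proof (rule mult_mono)
    show "(s / mu) ^ n \<le> g ^ n" using mu s by (intro power_mono) auto
    show "mu ^ n * x \<le> 31/15 * y" using growth by simp
    show "0 \<le> g ^ n" using mu s by (intro zero_le_power) (meson divide_nonneg_pos order_trans)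
  qed (use mu x in simp)
  finally show ?thesis by simp
qed

lemma sum_lessThan_reflect_weights:
  "(\<Sum>m<t. real (t - m) * g ^ (t - 1 - m) * f m) = (\<Sum>s<t. (real s + 1) * g ^ s * f (t - 1 - s))"
proof -
  have "(\<Sum>m<t. real (t - m) * g ^ (t - 1 - m) * f m)
      = (\<Sum>s<t. real (t - (t - Suc s)) * g ^ (t - 1 - (t - Suc s)) * f (t - Suc s))"
    by (rule sum.nat_diff_reindex[symmetric])
  also have "\<dots> = (\<Sum>s<t. (real s + 1) * g ^ s * f (t - 1 - s))"
    by (intro sum.cong refl) (auto simp: of_nat_diff)
  finally show ?thesis .
qed

lemma anpm_forcing_coef:
  assumes b: "0 < b" and L: "2 * sqrt b < L" and mu: "31 * L \<le> 64 * mu" and eps: "0 \<le> eps"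
  shows "31/15 * ((L - 2 * sqrt b) / 32 * eps) \<le> (2/15) * ((L - 2 * sqrt b) / L) * eps * mu"
proof -
  have L_pos: "0 < L" using L real_sqrt_gt_zero[OF b] by linarith
  have "31/15 * ((L - 2 * sqrt b) / 32 * eps) = (L - 2 * sqrt b) * eps / (480 * L) * (31 * L)"
    using L_pos by (simp add: field_simps)
  also have "\<dots> \<le> (L - 2 * sqrt b) * eps / (480 * L) * (64 * mu)"
    using mu L L_pos eps by (intro mult_left_mono) auto
  also have "\<dots> = (2/15) * ((L - 2 * sqrt b) / L) * eps * mu"
    using L_pos by (simp add: field_simps)
  finally show ?thesis .
qed

lemma forcing_le_by_growth:
  fixes s mu g eta a x y N :: real
  assumes mu: "0 < mu" and s: "0 \<le> s" and a: "0 \<le> a"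
    and y: "y \<le> a * x" and decay: "s ^ n * (mu * x) \<le> 31/15 * g ^ n * N"
    and coef: "31/15 * a \<le> eta * mu" and N: "0 \<le> g ^ n * N"
  shows "s ^ n * y \<le> eta * (g ^ n * N)"
proof -
  have "mu * (s ^ n * y) \<le> a * (s ^ n * (mu * x))"
    using mult_left_mono[OF y, of "mu * s ^ n"] mu s by (simp add: mult_ac)
  also have "\<dots> \<le> a * (31/15 * g ^ n * N)"
    using decay a by (rule mult_left_mono)
  also have "\<dots> = 31/15 * a * (g ^ n * N)"
    by simp
  also have "\<dots> \<le> eta * mu * (g ^ n * N)"
    using coef N by (rule mult_right_mono)
  also have "\<dots> = mu * (eta * (g ^ n * N))"
    by simp
  finally show ?thesis using mu by simp
qed

lemma L2_set_block_estimate: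
  fixes C M :: "nat \<Rightarrow> nat \<Rightarrow> real" and lam h :: "nat \<Rightarrow> real"
  assumes b: "0 < b" and L: "2 * sqrt b < L"
    and lamI: "\<And>i. i \<in> I \<Longrightarrow> L \<le> lam i" and lamJ: "\<And>i. i \<in> J \<Longrightarrow> \<bar>lam i\<bar> \<le> 2 * sqrt b"
    and c1: "\<And>i. i \<in> I \<union> J \<Longrightarrow> C 1 i = lam i / 2 * C 0 i + M 0 i"
    and rec: "\<And>i j. i \<in> I \<union> J \<Longrightarrow> 1 \<le> j \<Longrightarrow> j < t \<Longrightarrow>
                C (Suc j) i = lam i * C j i - b * C (j - 1) i + M j i"
    and nI: "\<And>j. j < t \<Longrightarrow> L2_set (M j) I \<le> (L - 2 * sqrt b) / 32 * L2_set (C j) I"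
    and nJ: "\<And>j. j < t \<Longrightarrow>
               L2_set (M j) J \<le> (L - 2 * sqrt b) / 32 * eps * (1 + h j) * L2_set (C j) I"
    and h0: "L2_set (C 0) J \<le> h 0 * L2_set (C 0) I"
    and h: "\<And>j. 0 \<le> h j" and eps: "0 \<le> eps"
  shows "L2_set (C t) J \<le> anpm_tan_bound L b eps h t * L2_set (C t) I"
proof -
  obtain mu where mu: "0 < mu" and rate: "sqrt b / mu \<le> anpm_rate L b" and mu_L: "31 * L \<le> 64 * mu"
    and growth: "\<And>r. r \<le> t \<Longrightarrow> 15 * (mu ^ (t - r) * L2_set (C r) I) \<le> 31 * L2_set (C t) I"
    by (rule L2_set_top_block_growth[OF b L lamI _ _ nI]) (use c1 rec in auto)
  define \<gamma> where "\<gamma> = anpm_rate L b"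
  define \<eta> where "\<eta> = (2/15) * ((L - 2 * sqrt b) / L) * eps"
  define N where "N = L2_set (C t) I"
  have sb: "0 < sqrt b" using b by simp
  have decay: "sqrt b ^ n * x \<le> 31/15 * \<gamma> ^ n * N" if "15 * (mu ^ n * x) \<le> 31 * N" "0 \<le> x" for n x
    using power_le_by_growth[OF mu _ rate that(2,1)] sb by (simp add: \<gamma>_def)
  have init: "sqrt b ^ t * L2_set (C 0) J \<le> 31/15 * \<gamma> ^ t * h 0 * N"
  proof -
    have "sqrt b ^ t * L2_set (C 0) J \<le> h 0 * (sqrt b ^ t * L2_set (C 0) I)"
      using mult_left_mono[OF h0, of "sqrt b ^ t"] sb by (simp add: mult_ac)
    also have "\<dots> \<le> h 0 * (31/15 * \<gamma> ^ t * N)"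
      using decay[of t "L2_set (C 0) I"] growth[of 0] h[of 0] by (intro mult_left_mono) (simp_all add: N_def)
    finally show ?thesis by (simp add: mult_ac)
  qed
  have forcing: "real (t - m) * sqrt b ^ (t - 1 - m) * L2_set (M m) J
      \<le> \<eta> * (real (t - m) * \<gamma> ^ (t - 1 - m) * (1 + h m)) * N" if m: "m < t" for m
  proof -
    have "mu ^ (t - m) = mu ^ (t - 1 - m) * mu" using m by (simp flip: power_Suc2 add: Suc_diff_Suc)
    then have decay_m: "sqrt b ^ (t - 1 - m) * (mu * L2_set (C m) I) \<le> 31/15 * \<gamma> ^ (t - 1 - m) * N"
      using growth[of m] m mu by (intro decay) (simp_all add: N_def mult_ac)
    have coef_m: "31/15 * ((L - 2 * sqrt b) / 32 * eps * (1 + h m)) \<le> \<eta> * (1 + h m) * mu"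
      using mult_right_mono[OF anpm_forcing_coef[OF b L mu_L eps], of "1 + h m"] h[of m]
      by (simp add: \<eta>_def mult_ac)
    have "sqrt b ^ (t - 1 - m) * L2_set (M m) J \<le> \<eta> * (1 + h m) * (\<gamma> ^ (t - 1 - m) * N)"
      by (rule forcing_le_by_growth[OF mu _ _ nJ[OF m] decay_m coef_m])
        (use sb L eps h[of m] anpm_rate_bounds[OF b L] in \<open>simp_all add: \<gamma>_def N_def\<close>)
    from mult_left_mono[OF this, of "real (t - m)"] show ?thesis
      by (simp add: mult_ac)
  qed
  have "L2_set (C t) J \<le> sqrt b ^ t * L2_set (C 0) J
      + (\<Sum>m<t. real (t - m) * sqrt b ^ (t - 1 - m) * L2_set (M m) J)"
    by (rule L2_set_bottom_block_le) (use b lamJ c1 rec in auto)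
  also have "\<dots> \<le> 31/15 * \<gamma> ^ t * h 0 * N
      + (\<Sum>m<t. \<eta> * (real (t - m) * \<gamma> ^ (t - 1 - m) * (1 + h m)) * N)"
    using init forcing by (intro add_mono sum_mono) auto
  also have "(\<Sum>m<t. \<eta> * (real (t - m) * \<gamma> ^ (t - 1 - m) * (1 + h m)) * N)
      = \<eta> * (\<Sum>s<t. (real s + 1) * \<gamma> ^ s * (1 + h (t - 1 - s))) * N"
    by (simp only: sum_lessThan_reflect_weights sum_distrib_right[symmetric] sum_distrib_left[symmetric])
  finally show ?thesis
    unfolding anpm_tan_bound_def \<gamma>_def[symmetric] \<eta>_def[symmetric] N_def by (simp add: algebra_simps)
qed

lemma vnorm_eq_L2_set: "vnorm v = L2_set (\<lambda>i. v $ i) {0..<dim_vec v}"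
  unfolding vnorm_def L2_set_def scalar_prod_def by (simp add: power2_eq_square)

lemma vnorm_nonneg: "0 \<le> vnorm v"
  unfolding vnorm_eq_L2_set by simp

lemma vnorm_power2: "(vnorm v)\<^sup>2 = v \<bullet> v"
proof -
  have "0 \<le> v \<bullet> v" unfolding scalar_prod_def by (auto intro: sum_nonneg)
  then show ?thesis unfolding vnorm_def by simp
qed

lemma vnorm_smult: "vnorm (c \<cdot>\<^sub>v v) = \<bar>c\<bar> * vnorm v"
proof -
  have "vnorm (c \<cdot>\<^sub>v v) = L2_set (\<lambda>i. c * v $ i) {0..<dim_vec v}"
    unfolding vnorm_eq_L2_set by (rule L2_set_cong) auto
  then show ?thesis unfolding vnorm_eq_L2_set by (simp add: L2_set_const_mult)
qed

lemma vnorm_eq_0_iff: "vnorm v = 0 \<longleftrightarrow> v = 0\<^sub>v (dim_vec v)"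
proof
  assume "vnorm v = 0"
  then have "\<forall>i\<in>{0..<dim_vec v}. v $ i = 0"
    unfolding vnorm_eq_L2_set by (simp add: L2_set_eq_0_iff)
  then show "v = 0\<^sub>v (dim_vec v)" by (intro eq_vecI) auto
next
  assume "v = 0\<^sub>v (dim_vec v)"
  then show "vnorm v = 0" unfolding vnorm_eq_L2_set by (metis L2_set_0' index_zero_vec(1) atLeastLessThan_iff)
qed

lemma vnorm_unit_vec: "0 < n \<Longrightarrow> vnorm (unit_vec n 0 :: real vec) = 1"
  unfolding vnorm_def by simp

lemma vnorm_normalize:
  fixes x :: "real vec"
  assumes "x \<noteq> 0\<^sub>v (dim_vec x)"
  shows "0 < vnorm x" "vnorm ((1 / vnorm x) \<cdot>\<^sub>v x) = 1"
proof -
  show "0 < vnorm x" using assms vnorm_eq_0_iff vnorm_nonneg[of x] by force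
  then show "vnorm ((1 / vnorm x) \<cdot>\<^sub>v x) = 1" by (simp add: vnorm_smult)
qed

lemma abs_scalar_prod_le: "dim_vec v = dim_vec w \<Longrightarrow> \<bar>v \<bullet> w\<bar> \<le> vnorm v * vnorm w"
  unfolding vnorm_eq_L2_set scalar_prod_def
  by (rule order_trans[OF sum_abs]) (simp add: abs_mult L2_set_mult_ineq)

lemma vnorm_mult_mat_vec_le_rows:
  fixes M :: "real mat"
  assumes x: "x \<in> carrier_vec (dim_col M)"
  shows "vnorm (M *\<^sub>v x) \<le> L2_set (\<lambda>i. vnorm (row M i)) {0..<dim_row M} * vnorm x"
proof -
  have "vnorm (M *\<^sub>v x) = L2_set (\<lambda>i. row M i \<bullet> x) {0..<dim_row M}"
    unfolding vnorm_eq_L2_set by (rule L2_set_cong) auto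
  also have "\<dots> \<le> L2_set (\<lambda>i. vnorm x * vnorm (row M i)) {0..<dim_row M}"
  proof (rule L2_set_mono_abs)
    fix i assume "i \<in> {0..<dim_row M}"
    then show "\<bar>row M i \<bullet> x\<bar> \<le> vnorm x * vnorm (row M i)"
      using abs_scalar_prod_le[of "row M i" x] x by (simp add: mult.commute)
  qed
  also have "\<dots> = vnorm x * L2_set (\<lambda>i. vnorm (row M i)) {0..<dim_row M}"
    by (simp add: L2_set_const_mult vnorm_nonneg)
  finally show ?thesis by (simp add: mult.commute)
qed

lemma vnorm_mult_mat_vec_le_opnorm2:
  fixes M :: "real mat"
  assumes x: "x \<in> carrier_vec (dim_col M)"
  shows "vnorm (M *\<^sub>v x) \<le> opnorm2 M * vnorm x"
proof (cases "x = 0\<^sub>v (dim_col M)")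
  case True
  then have "M *\<^sub>v x = 0\<^sub>v (dim_row M)" by (intro eq_vecI) auto
  then show ?thesis using True by (simp add: vnorm_eq_0_iff[THEN iffD2])
next
  case False
  then have nz: "x \<noteq> 0\<^sub>v (dim_vec x)" using x by simp
  define y where "y = (1 / vnorm x) \<cdot>\<^sub>v x"
  note N = vnorm_normalize[OF nz, folded y_def]
  have "bdd_above {vnorm (M *\<^sub>v x) | x. x \<in> carrier_vec (dim_col M) \<and> vnorm x = 1}"
    by (rule bdd_aboveI[of _ "L2_set (\<lambda>i. vnorm (row M i)) {0..<dim_row M}"])
      (use vnorm_mult_mat_vec_le_rows in force)
  then have "vnorm (M *\<^sub>v y) \<le> opnorm2 M"
    unfolding opnorm2_def by (rule cSup_upper[rotated]) (use x N in \<open>auto simp: y_def\<close>)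
  moreover have "M *\<^sub>v y = (1 / vnorm x) \<cdot>\<^sub>v (M *\<^sub>v x)"
    unfolding y_def using x by (intro mult_mat_vec[of M "dim_row M" "dim_col M"]) auto
  ultimately show ?thesis
    using N(1) by (simp add: vnorm_smult field_simps)
qed

lemma sigma_min_mult_le:
  fixes M :: "real mat"
  assumes x: "x \<in> carrier_vec (dim_col M)"
  shows "sigma_min M * vnorm x \<le> vnorm (M *\<^sub>v x)"
proof (cases "x = 0\<^sub>v (dim_col M)")
  case True
  then show ?thesis by (simp add: vnorm_eq_0_iff[THEN iffD2] vnorm_nonneg)
next
  case False
  then have nz: "x \<noteq> 0\<^sub>v (dim_vec x)" using x by simp
  define y where "y = (1 / vnorm x) \<cdot>\<^sub>v x"
  note N = vnorm_normalize[OF nz, folded y_def]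
  have "bdd_below {vnorm (M *\<^sub>v x) | x. x \<in> carrier_vec (dim_col M) \<and> vnorm x = 1}"
    by (rule bdd_belowI[of _ 0]) (auto simp: vnorm_nonneg)
  then have "sigma_min M \<le> vnorm (M *\<^sub>v y)"
    unfolding sigma_min_def by (rule cInf_lower[rotated]) (use x N in \<open>auto simp: y_def\<close>)
  moreover have "M *\<^sub>v y = (1 / vnorm x) \<cdot>\<^sub>v (M *\<^sub>v x)"
    unfolding y_def using x by (intro mult_mat_vec[of M "dim_row M" "dim_col M"]) auto
  ultimately show ?thesis
    using N(1) by (simp add: vnorm_smult field_simps)
qed

lemma sigma_min_greatest:
  fixes M :: "real mat"
  assumes "0 < dim_col M"
    and "\<And>x. x \<in> carrier_vec (dim_col M) \<Longrightarrow> vnorm x = 1 \<Longrightarrow> m \<le> vnorm (M *\<^sub>v x)"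
  shows "m \<le> sigma_min M"
  unfolding sigma_min_def
proof (rule cInf_greatest)
  show "{vnorm (M *\<^sub>v x) | x. x \<in> carrier_vec (dim_col M) \<and> vnorm x = 1} \<noteq> {}"
    using vnorm_unit_vec[OF assms(1)] unit_vec_carrier by blast
qed (use assms(2) in auto)

lemma sigma_min_nonneg: "0 < dim_col M \<Longrightarrow> 0 \<le> sigma_min M"
  by (rule sigma_min_greatest) (simp_all add: vnorm_nonneg)

lemma orthonormal_cols_scalar_prod:
  fixes X :: "real mat"
  assumes X: "X \<in> carrier_mat d k" "transpose_mat X * X = 1\<^sub>m k" and y: "y \<in> carrier_vec k"
  shows "(X *\<^sub>v y) \<bullet> (X *\<^sub>v y) = y \<bullet> y"
proof -
  have "transpose_mat X *\<^sub>v (X *\<^sub>v y) = (transpose_mat X * X) *\<^sub>v y"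
    using X y by (intro assoc_mult_mat_vec[symmetric]) auto
  then have "transpose_mat X *\<^sub>v (X *\<^sub>v y) = y" using X y by simp
  then show ?thesis
    using transpose_vec_mult_scalar[OF X(1) y, of "X *\<^sub>v y"] X y by simp
qed

lemma scalar_prod_eigvec_mult:
  fixes A :: "real mat"
  assumes A: "A \<in> carrier_mat d d" "transpose_mat A = A"
    and u: "u \<in> carrier_vec d" "A *\<^sub>v u = l \<cdot>\<^sub>v u" and z: "z \<in> carrier_vec d"
  shows "u \<bullet> (A *\<^sub>v z) = l * (u \<bullet> z)"
proof -
  have "u \<bullet> (A *\<^sub>v z) = (transpose_mat A *\<^sub>v u) \<bullet> z"
    by (rule transpose_vec_mult_scalar[OF A(1) z u(1), symmetric])
  also have "\<dots> = l * (u \<bullet> z)" using A u z by simp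
  finally show ?thesis .
qed

lemma col_cols_mat:
  assumes "j < m" "u (a + j + 1) \<in> carrier_vec d"
  shows "col (cols_mat d u a m) j = u (a + j + 1)"
  unfolding cols_mat_def using assms by (intro eq_vecI) auto

lemma vnorm_transpose_cols_mat:
  assumes z: "z \<in> carrier_vec d" and u: "\<And>i. a + 1 \<le> i \<Longrightarrow> i \<le> a + m \<Longrightarrow> u i \<in> carrier_vec d"
  shows "vnorm (transpose_mat (cols_mat d u a m) *\<^sub>v z) = L2_set (\<lambda>i. u i \<bullet> z) {a+1..a+m}"
proof -
  have "(transpose_mat (cols_mat d u a m) *\<^sub>v z) $ j = u (a + j + 1) \<bullet> z" if "j < m" for j
  proof -
    have "col (cols_mat d u a m) j = u (a + j + 1)"
      using col_cols_mat[of j m u a d] u[of "a + j + 1"] that by simp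
    moreover have "(transpose_mat (cols_mat d u a m) *\<^sub>v z) $ j = col (cols_mat d u a m) j \<bullet> z"
      using that by (simp add: cols_mat_def)
    ultimately show ?thesis by simp
  qed
  then have "vnorm (transpose_mat (cols_mat d u a m) *\<^sub>v z) = L2_set (\<lambda>j. u (a + j + 1) \<bullet> z) {0..<m}"
    unfolding vnorm_eq_L2_set by (intro L2_set_cong) (auto simp: cols_mat_def)
  also have "\<dots> = L2_set (\<lambda>i. u i \<bullet> z) ((\<lambda>j. a + j + 1) ` {0..<m})"
    unfolding L2_set_def by (subst sum.reindex) (auto simp: inj_on_def)
  also have "(\<lambda>j. a + j + 1) ` {0..<m} = {a+1..a+m}"
  proof
    show "{a+1..a+m} \<subseteq> (\<lambda>j. a + j + 1) ` {0..<m}"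
    proof
      fix i assume i: "i \<in> {a+1..a+m}"
      then have "i = a + (i - a - 1) + 1" "i - a - 1 \<in> {0..<m}" by auto
      then show "i \<in> (\<lambda>j. a + j + 1) ` {0..<m}" by (rule rev_image_eqI[rotated])
    qed
  qed auto
  finally show ?thesis .
qed

lemma L2_set_orthonormal_coords:
  assumes u: "\<And>i. 1 \<le> i \<Longrightarrow> i \<le> d \<Longrightarrow> u i \<in> carrier_vec d"
    and on: "\<And>i j. 1 \<le> i \<Longrightarrow> i \<le> d \<Longrightarrow> 1 \<le> j \<Longrightarrow> j \<le> d \<Longrightarrow>
               u i \<bullet> u j = (if i = j then 1 else 0)"
    and z: "z \<in> carrier_vec d"
  shows "(L2_set (\<lambda>i. u i \<bullet> z) {1..d})\<^sup>2 = z \<bullet> z"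
proof -
  define U where "U = cols_mat d u 0 d"
  have U: "U \<in> carrier_mat d d" and UT: "transpose_mat U \<in> carrier_mat d d"
    unfolding U_def cols_mat_def by auto
  have col_U: "col U j = u (j + 1)" if "j < d" for j
    unfolding U_def using col_cols_mat[of j d u 0 d] u[of "j + 1"] that by simp
  have "transpose_mat U * U = 1\<^sub>m d"
    by (rule eq_matI) (use U col_U on in auto)
  then have "U * transpose_mat U = 1\<^sub>m d"
    using mat_mult_left_right_inverse[OF UT U] by simp
  then have "U *\<^sub>v (transpose_mat U *\<^sub>v z) = z"
    using U UT z by (simp flip: assoc_mult_mat_vec)
  then have "(transpose_mat U *\<^sub>v z) \<bullet> (transpose_mat U *\<^sub>v z) = z \<bullet> z"
    using transpose_vec_mult_scalar[OF U _ z, of "transpose_mat U *\<^sub>v z"] UT z by simp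
  moreover have "vnorm (transpose_mat U *\<^sub>v z) = L2_set (\<lambda>i. u i \<bullet> z) {1..d}"
    unfolding U_def using vnorm_transpose_cols_mat[OF z, of 0 d u] u by simp
  ultimately show ?thesis by (simp flip: vnorm_power2)
qed

lemma tan_arccos:
  fixes s :: real
  assumes "0 \<le> s" "s \<le> 1"
  shows "tan (arccos s) = sqrt (1 - s\<^sup>2) / s"
  using assms by (simp add: tan_def sin_arccos cos_arccos)

lemma tan_arccos_nonneg: "0 \<le> s \<Longrightarrow> s \<le> 1 \<Longrightarrow> 0 \<le> tan (arccos s)"
  by (simp add: tan_arccos abs_square_le_1)

lemma components_le_tan_arccos:
  fixes s a b n :: real
  assumes s: "0 < s" "s \<le> 1" and ab: "0 \<le> a" "0 \<le> b" "0 \<le> n" "a\<^sup>2 + b\<^sup>2 = n\<^sup>2"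
    and low: "s * n \<le> a"
  shows "b \<le> tan (arccos s) * a" "n \<le> (1 + tan (arccos s)) * a"
proof -
  have t: "tan (arccos s) = sqrt (1 - s\<^sup>2) / s" using s by (simp add: tan_arccos)
  have s2: "s\<^sup>2 \<le> 1" using s by (simp add: power_le_one)
  have n_le: "n \<le> a / s" using low s by (simp add: field_simps)
  have "n\<^sup>2 \<le> (a / s)\<^sup>2" using n_le ab by (intro power_mono) auto
  then have "b\<^sup>2 \<le> (a / s)\<^sup>2 - a\<^sup>2" using ab by simp
  also have "\<dots> = (sqrt (1 - s\<^sup>2) / s * a)\<^sup>2"
    using s s2 by (simp add: power_mult_distrib power_divide field_simps)
  finally have "b\<^sup>2 \<le> (tan (arccos s) * a)\<^sup>2" unfolding t .
  moreover have "0 \<le> tan (arccos s) * a" using s ab by (simp add: tan_arccos_nonneg)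
  ultimately show "b \<le> tan (arccos s) * a" using power2_le_imp_le by blast
  have "1 \<le> s + sqrt (1 - s\<^sup>2)"
  proof -
    have "s\<^sup>2 \<le> s" using s by (simp add: power2_eq_square mult_left_le_one_le)
    moreover have "1 - s\<^sup>2 \<le> sqrt (1 - s\<^sup>2)"
    proof -
      have "0 \<le> 1 - s\<^sup>2" "1 - s\<^sup>2 \<le> 1" using s by (auto simp: power_le_one)
      then show ?thesis by (simp add: real_le_rsqrt power2_eq_square mult_left_le_one_le)
    qed
    ultimately show ?thesis by linarith
  qed
  then have "1 / s \<le> 1 + tan (arccos s)" unfolding t using s by (simp add: field_simps)
  then have "a / s \<le> (1 + tan (arccos s)) * a" using ab
    by (metis mult.commute mult_right_mono times_divide_eq_right mult_1)
  then show "n \<le> (1 + tan (arccos s)) * a" using n_le by linarith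
qed

lemma cos_lower_from_tan_bound:
  fixes a b K :: real
  assumes "0 \<le> a" "0 \<le> K" "a\<^sup>2 + b\<^sup>2 = 1" "b \<le> K * a" "0 \<le> b"
  shows "1 / sqrt (1 + K\<^sup>2) \<le> a"
proof -
  have "b\<^sup>2 \<le> (K * a)\<^sup>2" using assms by (intro power_mono) auto
  then have "1 \<le> a\<^sup>2 * (1 + K\<^sup>2)" using assms by (simp add: power_mult_distrib algebra_simps)
  then have "sqrt 1 \<le> sqrt (a\<^sup>2 * (1 + K\<^sup>2))" by (rule real_sqrt_le_mono)
  then have "1 \<le> a * sqrt (1 + K\<^sup>2)" using assms by (simp add: real_sqrt_mult)
  moreover have "0 < sqrt (1 + K\<^sup>2)" by (simp add: add_pos_nonneg)
  ultimately show ?thesis by (simp add: field_simps)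
qed

lemma tan_arccos_le:
  fixes s K :: real
  assumes K: "0 \<le> K" and low: "1 / sqrt (1 + K\<^sup>2) \<le> s" and s1: "s \<le> 1"
  shows "0 < s" "tan (arccos s) \<le> K"
proof -
  define q where "q = sqrt (1 + K\<^sup>2)"
  have q: "0 < q" unfolding q_def by (simp add: add_pos_nonneg)
  have q2: "q\<^sup>2 = 1 + K\<^sup>2" unfolding q_def by (simp add: add_nonneg_nonneg)
  have "0 < 1 / q" using q by simp
  then show sp: "0 < s" using low unfolding q_def[symmetric] by linarith
  have "1 \<le> s * q" using low q unfolding q_def[symmetric] by (simp add: field_simps)
  then have "1\<^sup>2 \<le> (s * q)\<^sup>2" by (intro power_mono) auto
  then have "1 \<le> s\<^sup>2 * (1 + K\<^sup>2)" by (simp add: power_mult_distrib q2)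
  then have "1 - s\<^sup>2 \<le> (K * s)\<^sup>2" by (simp add: power_mult_distrib algebra_simps)
  then have "sqrt (1 - s\<^sup>2) \<le> sqrt ((K * s)\<^sup>2)" by (rule real_sqrt_le_mono)
  also have "\<dots> = K * s" using K sp by simp
  finally show "tan (arccos s) \<le> K" using sp s1 by (simp add: tan_arccos field_simps)
qed

lemma L2_set_coords_mult_le_opnorm2:
  fixes F :: "real mat"
  assumes F: "F \<in> carrier_mat d k" and x: "x \<in> carrier_vec k"
    and u: "\<And>i. a + 1 \<le> i \<Longrightarrow> i \<le> a + m \<Longrightarrow> u i \<in> carrier_vec d"
  shows "L2_set (\<lambda>i. u i \<bullet> (F *\<^sub>v x)) {a+1..a+m}
           \<le> opnorm2 (transpose_mat (cols_mat d u a m) * F) * vnorm x"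
proof -
  have "L2_set (\<lambda>i. u i \<bullet> (F *\<^sub>v x)) {a+1..a+m} = vnorm (transpose_mat (cols_mat d u a m) *\<^sub>v (F *\<^sub>v x))"
    using vnorm_transpose_cols_mat[of "F *\<^sub>v x" d a m u] F x u by simp
  also have "transpose_mat (cols_mat d u a m) *\<^sub>v (F *\<^sub>v x) = (transpose_mat (cols_mat d u a m) * F) *\<^sub>v x"
    using F x by (intro assoc_mult_mat_vec[symmetric]) (auto simp: cols_mat_def)
  also have "vnorm \<dots> \<le> opnorm2 (transpose_mat (cols_mat d u a m) * F) * vnorm x"
    by (rule vnorm_mult_mat_vec_le_opnorm2) (use F x in \<open>auto simp: cols_mat_def\<close>)
  finally show ?thesis .
qed

lemma eigvec_coord_recurrence:
  fixes A :: "real mat"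
  assumes A: "A \<in> carrier_mat d d" "transpose_mat A = A"
    and u: "u \<in> carrier_vec d" "A *\<^sub>v u = l \<cdot>\<^sub>v u"
    and z: "z \<in> carrier_vec d" "z' \<in> carrier_vec d" "f \<in> carrier_vec d"
  shows "u \<bullet> (A *\<^sub>v z - b \<cdot>\<^sub>v z' + f) = l * (u \<bullet> z) - b * (u \<bullet> z') + u \<bullet> f"
    and "u \<bullet> ((1/2) \<cdot>\<^sub>v (A *\<^sub>v z) + f) = l / 2 * (u \<bullet> z) + u \<bullet> f"
proof -
  have Az: "A *\<^sub>v z \<in> carrier_vec d" using A z by simp
  have eig: "u \<bullet> (A *\<^sub>v z) = l * (u \<bullet> z)" by (rule scalar_prod_eigvec_mult[OF A u z(1)])
  show "u \<bullet> (A *\<^sub>v z - b \<cdot>\<^sub>v z' + f) = l * (u \<bullet> z) - b * (u \<bullet> z') + u \<bullet> f"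
    using u z Az eig
    by (simp add: scalar_prod_add_distrib[of _ d] scalar_prod_minus_distrib[of _ d]
        scalar_prod_smult_distrib[of _ d])
  show "u \<bullet> ((1/2) \<cdot>\<^sub>v (A *\<^sub>v z) + f) = l / 2 * (u \<bullet> z) + u \<bullet> f"
    using u z Az eig by (simp add: scalar_prod_add_distrib[of _ d] scalar_prod_smult_distrib[of _ d])
qed

lemma smult_mat_mult_vec:
  fixes M :: "real mat"
  assumes "M \<in> carrier_mat n m" "x \<in> carrier_vec m"
  shows "(c \<cdot>\<^sub>m M) *\<^sub>v x = c \<cdot>\<^sub>v (M *\<^sub>v x)"
  using assms by (intro eq_vecI) (auto simp: scalar_prod_def sum_distrib_left mult.assoc)

definition minv_inverts :: "nat \<Rightarrow> real mat \<Rightarrow> bool" where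
  "minv_inverts n M \<longleftrightarrow> minv M \<in> carrier_mat n n \<and> M * minv M = 1\<^sub>m n \<and> minv M * M = 1\<^sub>m n"

lemma minv_invertsI:
  fixes M :: "real mat"
  assumes M: "M \<in> carrier_mat n n"
    and ker: "\<And>v. v \<in> carrier_vec n \<Longrightarrow> v \<noteq> 0\<^sub>v n \<Longrightarrow> M *\<^sub>v v \<noteq> 0\<^sub>v n"
  shows "minv_inverts n M"
proof -
  have "det M \<noteq> 0" using det_0_iff_vec_prod_zero_field[OF M] ker by auto
  from det_non_zero_imp_unit[OF M this, of "()"]
  obtain B where B: "B \<in> carrier_mat n n" "B * M = 1\<^sub>m n"
    unfolding Units_def ring_mat_def by auto
  then have "M * B = 1\<^sub>m n" by (rule mat_mult_left_right_inverse[OF _ M])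
  then have "\<exists>B. B \<in> carrier_mat (dim_row M) (dim_row M) \<and> M * B = 1\<^sub>m (dim_row M) \<and> B * M = 1\<^sub>m (dim_row M)"
    using B M by auto
  from someI_ex[OF this] show ?thesis using M unfolding minv_def minv_inverts_def by auto
qed

section \<open>The accelerated noisy power method\<close>

text \<open>Positive semidefiniteness of \<open>A\<close>
  enters only through \<open>0 \<le> lam d\<close>.\<close>

locale anpm =
  fixes d k :: nat and eps beta :: real and A :: "real mat" and lam :: "nat \<Rightarrow> real"
    and u :: "nat \<Rightarrow> real vec" and X R Xi :: "nat \<Rightarrow> real mat"
  assumes dims: "k < d" "1 \<le> k"
    and eps: "0 \<le> eps"
    and A: "A \<in> carrier_mat d d" "transpose_mat A = A"
    and eig_sorted: "\<And>i j. 1 \<le> i \<Longrightarrow> i \<le> j \<Longrightarrow> j \<le> d \<Longrightarrow> lam j \<le> lam i"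
    and eig_nonneg: "0 \<le> lam d"
    and eigvec: "\<And>i. 1 \<le> i \<Longrightarrow> i \<le> d \<Longrightarrow> u i \<in> carrier_vec d \<and> A *\<^sub>v u i = lam i \<cdot>\<^sub>v u i"
    and orthonormal: "\<And>i j. 1 \<le> i \<Longrightarrow> i \<le> d \<Longrightarrow> 1 \<le> j \<Longrightarrow> j \<le> d \<Longrightarrow>
                        u i \<bullet> u j = (if i = j then 1 else 0)"
    and beta: "0 < beta" "2 * sqrt beta < lam k" "lam (k + 1) \<le> 2 * sqrt beta"
    and X0: "X 0 \<in> stiefel d k" "0 < cos (theta_k (cols_mat d u 0 k) (X 0))"
    and Xi: "\<And>t. Xi t \<in> carrier_mat d k"
    and pert_bottom: "\<And>t. opnorm2 (transpose_mat (cols_mat d u k (d - k)) * Xi t)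
                            \<le> (1/32) * (lam k - 2 * sqrt beta) * eps"
    and pert_top: "\<And>t. opnorm2 (transpose_mat (cols_mat d u 0 k) * Xi t)
                         \<le> (1/32) * (lam k - 2 * sqrt beta) * cos (theta_k (cols_mat d u 0 k) (X t))"
    and QR_1: "is_QR d k ((1/2) \<cdot>\<^sub>m (A * X 0) + Xi 0) (X 1) (R 1)"
    and QR_Suc: "\<And>t. 1 \<le> t \<Longrightarrow>
                   is_QR d k (A * X t - beta \<cdot>\<^sub>m (X (t - 1) * minv (R t)) + Xi t) (X (Suc t)) (R (Suc t))"
begin

definition top_norm :: "real vec \<Rightarrow> real" where
  "top_norm z = L2_set (\<lambda>i. u i \<bullet> z) {1..k}"

definition bottom_norm :: "real vec \<Rightarrow> real" where
  "bottom_norm z = L2_set (\<lambda>i. u i \<bullet> z) {k+1..d}"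

definition cos_angle :: "nat \<Rightarrow> real" where
  "cos_angle t = sigma_min (transpose_mat (cols_mat d u 0 k) * X t)"

definition tan_angle :: "nat \<Rightarrow> real" where
  "tan_angle t = tan (theta_k (cols_mat d u 0 k) (X t))"

lemma u_carrier: "1 \<le> i \<Longrightarrow> i \<le> d \<Longrightarrow> u i \<in> carrier_vec d"
  using eigvec by blast

lemma X_carrier: "X t \<in> carrier_mat d k" and X_orthonormal: "transpose_mat (X t) * X t = 1\<^sub>m k"
proof -
  have "X t \<in> carrier_mat d k \<and> transpose_mat (X t) * X t = 1\<^sub>m k"
  proof (cases t)
    case 0
    then show ?thesis using X0 unfolding stiefel_def by blast
  next
    case (Suc s)
    then show ?thesis
      using QR_1 QR_Suc[of s] unfolding is_QR_def by (cases s) auto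
  qed
  then show "X t \<in> carrier_mat d k" "transpose_mat (X t) * X t = 1\<^sub>m k" by auto
qed

lemma R_carrier: "1 \<le> t \<Longrightarrow> R t \<in> carrier_mat k k"
  using QR_1 QR_Suc[of "t - 1"] unfolding is_QR_def by (cases "t = 1") auto

lemma QR_product:
  "X 1 * R 1 = (1/2) \<cdot>\<^sub>m (A * X 0) + Xi 0"
  "1 \<le> t \<Longrightarrow> X (Suc t) * R (Suc t) = A * X t - beta \<cdot>\<^sub>m (X (t - 1) * minv (R t)) + Xi t"
  using QR_1 QR_Suc[of t] unfolding is_QR_def by auto

lemma top_bottom_norm_split:
  assumes y: "y \<in> carrier_vec k"
  shows "(top_norm (X t *\<^sub>v y))\<^sup>2 + (bottom_norm (X t *\<^sub>v y))\<^sup>2 = (vnorm y)\<^sup>2"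
proof -
  define z where "z = X t *\<^sub>v y"
  have z: "z \<in> carrier_vec d" using X_carrier[of t] y by (simp add: z_def)
  have "{1..d} = {1..k} \<union> {k+1..d}" using dims by auto
  then have "(L2_set (\<lambda>i. u i \<bullet> z) {1..d})\<^sup>2 = (top_norm z)\<^sup>2 + (bottom_norm z)\<^sup>2"
    unfolding top_norm_def bottom_norm_def L2_set_def
    by (simp add: sum_nonneg sum.union_disjoint)
  moreover have "(L2_set (\<lambda>i. u i \<bullet> z) {1..d})\<^sup>2 = z \<bullet> z"
    by (rule L2_set_orthonormal_coords[OF u_carrier orthonormal z])
  moreover have "z \<bullet> z = y \<bullet> y"
    unfolding z_def by (rule orthonormal_cols_scalar_prod[OF X_carrier X_orthonormal y])
  ultimately show ?thesis by (simp add: z_def vnorm_power2)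
qed

lemma vnorm_top_block: "y \<in> carrier_vec k \<Longrightarrow>
    vnorm ((transpose_mat (cols_mat d u 0 k) * X t) *\<^sub>v y) = top_norm (X t *\<^sub>v y)"
proof -
  assume y: "y \<in> carrier_vec k"
  have "(transpose_mat (cols_mat d u 0 k) * X t) *\<^sub>v y = transpose_mat (cols_mat d u 0 k) *\<^sub>v (X t *\<^sub>v y)"
    using X_carrier[of t] y by (intro assoc_mult_mat_vec) (auto simp: cols_mat_def)
  then show ?thesis
    using X_carrier[of t] y vnorm_transpose_cols_mat[of "X t *\<^sub>v y" d 0 k u] u_carrier dims
    by (simp add: top_norm_def)
qed

lemma cos_angle_le_top_norm: "y \<in> carrier_vec k \<Longrightarrow> cos_angle t * vnorm y \<le> top_norm (X t *\<^sub>v y)"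
  using sigma_min_mult_le[of y "transpose_mat (cols_mat d u 0 k) * X t"] vnorm_top_block[of y t]
    X_carrier[of t]
  by (simp add: cos_angle_def)

lemma cos_angle_bounds: "0 \<le> cos_angle t" "cos_angle t \<le> 1"
proof -
  have dim: "dim_col (transpose_mat (cols_mat d u 0 k) * X t) = k" using X_carrier[of t] by simp
  show "0 \<le> cos_angle t"
    unfolding cos_angle_def by (rule sigma_min_nonneg) (use dim dims in simp)
  define y where "y = (unit_vec k 0 :: real vec)"
  have y: "y \<in> carrier_vec k" "vnorm y = 1" using vnorm_unit_vec[of k] dims by (auto simp: y_def)
  have "(top_norm (X t *\<^sub>v y))\<^sup>2 + (bottom_norm (X t *\<^sub>v y))\<^sup>2 = 1"
    using top_bottom_norm_split[OF y(1), of t] y(2) by simp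
  then have "(top_norm (X t *\<^sub>v y))\<^sup>2 \<le> 1\<^sup>2"
    unfolding power_one using zero_le_power2[of "bottom_norm (X t *\<^sub>v y)"] by linarith
  then have "top_norm (X t *\<^sub>v y) \<le> 1"
    by (rule power2_le_imp_le) simp
  then show "cos_angle t \<le> 1"
    using cos_angle_le_top_norm[OF y(1), of t] y(2) by simp
qed

lemma cos_theta_eq: "cos (theta_k (cols_mat d u 0 k) (X t)) = cos_angle t"
  unfolding theta_k_def cos_angle_def[symmetric] using cos_angle_bounds[of t] by simp

lemma tan_angle_eq: "tan_angle t = tan (arccos (cos_angle t))"
  unfolding tan_angle_def theta_k_def cos_angle_def ..

lemma tan_angle_nonneg: "0 \<le> tan_angle t"
  unfolding tan_angle_eq by (rule tan_arccos_nonneg) (rule cos_angle_bounds)+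

lemma components_le_tan_angle:
  assumes "0 < cos_angle t" "y \<in> carrier_vec k"
  shows "bottom_norm (X t *\<^sub>v y) \<le> tan_angle t * top_norm (X t *\<^sub>v y)"
    and "vnorm y \<le> (1 + tan_angle t) * top_norm (X t *\<^sub>v y)"
  using components_le_tan_arccos[OF assms(1) cos_angle_bounds(2) _ _ vnorm_nonneg
      top_bottom_norm_split[OF assms(2)] cos_angle_le_top_norm[OF assms(2)]]
  by (simp_all add: tan_angle_eq top_norm_def bottom_norm_def)

lemma top_norm_noise_le:
  assumes x: "x \<in> carrier_vec k"
  shows "top_norm (Xi t *\<^sub>v x) \<le> (lam k - 2 * sqrt beta) / 32 * cos_angle t * vnorm x"
proof -
  have "top_norm (Xi t *\<^sub>v x) \<le> opnorm2 (transpose_mat (cols_mat d u 0 k) * Xi t) * vnorm x"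
    unfolding top_norm_def using L2_set_coords_mult_le_opnorm2[OF Xi x, of 0 k u] u_carrier dims
    by simp
  also have "\<dots> \<le> (lam k - 2 * sqrt beta) / 32 * cos_angle t * vnorm x"
    using mult_right_mono[OF pert_top[of t] vnorm_nonneg[of x]] by (simp add: cos_theta_eq)
  finally show ?thesis .
qed

lemma bottom_norm_noise_le:
  assumes x: "x \<in> carrier_vec k"
  shows "bottom_norm (Xi t *\<^sub>v x) \<le> (lam k - 2 * sqrt beta) / 32 * eps * vnorm x"
proof -
  have "bottom_norm (Xi t *\<^sub>v x) \<le> opnorm2 (transpose_mat (cols_mat d u k (d - k)) * Xi t) * vnorm x"
    unfolding bottom_norm_def using L2_set_coords_mult_le_opnorm2[OF Xi x, of k "d - k" u] u_carrier dims
    by simp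
  also have "\<dots> \<le> (lam k - 2 * sqrt beta) / 32 * eps * vnorm x"
    using mult_right_mono[OF pert_bottom[of t] vnorm_nonneg[of x]] by simp
  finally show ?thesis .
qed

lemma eigval_top_ge: "i \<in> {1..k} \<Longrightarrow> lam k \<le> lam i"
  using eig_sorted dims by auto

lemma eigval_bottom_abs_le: "i \<in> {k+1..d} \<Longrightarrow> \<bar>lam i\<bar> \<le> 2 * sqrt beta"
  using eig_sorted[of i d] eig_sorted[of "k + 1" i] eig_nonneg beta dims by auto

text \<open>For vectors pulled back through the QR factors, \<open>x (j - 1) = R\<^sub>j\<^sup>-\<^sup>1 x j\<close>, the
  normalisation disappears: \<open>trajectory x j = X\<^sub>j x j\<close>, and the iteration becomes the unnormalised
  three-term recurrence \<open>z\<^sub>j\<^sub>+\<^sub>1 = A z\<^sub>j - beta z\<^sub>j\<^sub>-\<^sub>1 + Xi\<^sub>j x\<^sub>j\<close>.\<close>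

definition trajectory :: "(nat \<Rightarrow> real vec) \<Rightarrow> nat \<Rightarrow> real vec" where
  "trajectory x j = (if j = 0 then X 0 *\<^sub>v x 0 else (X j * R j) *\<^sub>v x (j - 1))"

context
  fixes T :: nat and x :: "nat \<Rightarrow> real vec"
  assumes x_carrier: "\<And>j. x j \<in> carrier_vec k"
    and R_inv: "\<And>j. 1 \<le> j \<Longrightarrow> j < T \<Longrightarrow> minv_inverts k (R j)"
    and x_prev: "\<And>j. 1 \<le> j \<Longrightarrow> j < T \<Longrightarrow> x (j - 1) = minv (R j) *\<^sub>v x j"
begin

lemma trajectory_carrier: "trajectory x j \<in> carrier_vec d"
proof (cases "j = 0")
  case False
  then have "R j \<in> carrier_mat k k" using R_carrier by simp
  then show ?thesis using False X_carrier[of j] x_carrier by (simp add: trajectory_def)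
qed (use mult_mat_vec_carrier[OF X_carrier[of 0] x_carrier[of 0]] in \<open>simp add: trajectory_def\<close>)

lemma trajectory_eq: "j < T \<Longrightarrow> trajectory x j = X j *\<^sub>v x j"
proof (cases "j = 0")
  case False
  assume "j < T"
  with False have j: "1 \<le> j" "j < T" by auto
  have inv: "minv (R j) \<in> carrier_mat k k" "R j * minv (R j) = 1\<^sub>m k"
    using R_inv[OF j] unfolding minv_inverts_def by auto
  have "R j *\<^sub>v x (j - 1) = (R j * minv (R j)) *\<^sub>v x j"
    unfolding x_prev[OF j] by (rule assoc_mult_mat_vec[symmetric, OF R_carrier[OF j(1)] inv(1) x_carrier])
  then have "R j *\<^sub>v x (j - 1) = x j"
    using inv(2) x_carrier[of j] by simp
  then show ?thesis
    using False X_carrier[of j] R_carrier[OF j(1)] x_carrier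
    by (simp add: trajectory_def assoc_mult_mat_vec)
qed (simp add: trajectory_def)

lemma trajectory_1: "trajectory x 1 = (1/2) \<cdot>\<^sub>v (A *\<^sub>v trajectory x 0) + Xi 0 *\<^sub>v x 0"
proof -
  have AX: "A * X 0 \<in> carrier_mat d k" using A X_carrier[of 0] by simp
  have "trajectory x 1 = ((1/2) \<cdot>\<^sub>m (A * X 0) + Xi 0) *\<^sub>v x 0"
    unfolding trajectory_def QR_product(1)[symmetric] by simp
  also have "\<dots> = (1/2) \<cdot>\<^sub>v ((A * X 0) *\<^sub>v x 0) + Xi 0 *\<^sub>v x 0"
    using AX Xi[of 0] x_carrier[of 0]
    by (simp add: add_mult_distrib_mat_vec[of _ d k] smult_mat_mult_vec)
  also have "(A * X 0) *\<^sub>v x 0 = A *\<^sub>v trajectory x 0"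
    using A X_carrier[of 0] x_carrier[of 0] by (simp add: trajectory_def assoc_mult_mat_vec)
  finally show ?thesis .
qed

lemma trajectory_Suc:
  assumes j: "1 \<le> j" "j < T"
  shows "trajectory x (Suc j) = A *\<^sub>v trajectory x j - beta \<cdot>\<^sub>v trajectory x (j - 1) + Xi j *\<^sub>v x j"
proof -
  have AX: "A * X j \<in> carrier_mat d k" using A X_carrier[of j] by simp
  have XR: "X (j - 1) * minv (R j) \<in> carrier_mat d k"
    using X_carrier[of "j - 1"] R_inv[OF j] by (simp add: minv_inverts_def)
  have AXR: "A * X j - beta \<cdot>\<^sub>m (X (j - 1) * minv (R j)) \<in> carrier_mat d k"
    using XR by (intro minus_carrier_mat) simp
  have "trajectory x (Suc j) = (A * X j - beta \<cdot>\<^sub>m (X (j - 1) * minv (R j)) + Xi j) *\<^sub>v x j"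
    using j by (simp add: trajectory_def QR_product(2))
  also have "\<dots> = (A * X j - beta \<cdot>\<^sub>m (X (j - 1) * minv (R j))) *\<^sub>v x j + Xi j *\<^sub>v x j"
    by (rule add_mult_distrib_mat_vec[OF AXR Xi x_carrier])
  also have "(A * X j - beta \<cdot>\<^sub>m (X (j - 1) * minv (R j))) *\<^sub>v x j
      = (A * X j) *\<^sub>v x j - (beta \<cdot>\<^sub>m (X (j - 1) * minv (R j))) *\<^sub>v x j"
    by (rule minus_mult_distrib_mat_vec[of _ d k]) (use AX XR x_carrier in auto)
  also have "(beta \<cdot>\<^sub>m (X (j - 1) * minv (R j))) *\<^sub>v x j = beta \<cdot>\<^sub>v ((X (j - 1) * minv (R j)) *\<^sub>v x j)"
    by (rule smult_mat_mult_vec[OF XR x_carrier])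
  also have "(A * X j) *\<^sub>v x j = A *\<^sub>v trajectory x j"
    using A X_carrier[of j] x_carrier[of j] trajectory_eq[OF j(2)] by (simp add: assoc_mult_mat_vec)
  also have "(X (j - 1) * minv (R j)) *\<^sub>v x j = trajectory x (j - 1)"
  proof -
    have "minv (R j) \<in> carrier_mat k k" using R_inv[OF j] unfolding minv_inverts_def by auto
    then have "(X (j - 1) * minv (R j)) *\<^sub>v x j = X (j - 1) *\<^sub>v x (j - 1)"
      unfolding x_prev[OF j] by (rule assoc_mult_mat_vec[OF X_carrier _ x_carrier])
    then show ?thesis using trajectory_eq[of "j - 1"] j by simp
  qed
  finally show ?thesis .
qed

lemma trajectory_coord_recurrence:
  assumes i: "1 \<le> i" "i \<le> d"
  shows "u i \<bullet> trajectory x 1 = lam i / 2 * (u i \<bullet> trajectory x 0) + u i \<bullet> (Xi 0 *\<^sub>v x 0)"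
    and "1 \<le> j \<Longrightarrow> j < T \<Longrightarrow> u i \<bullet> trajectory x (Suc j)
           = lam i * (u i \<bullet> trajectory x j) - beta * (u i \<bullet> trajectory x (j - 1)) + u i \<bullet> (Xi j *\<^sub>v x j)"
proof -
  have u: "u i \<in> carrier_vec d" "A *\<^sub>v u i = lam i \<cdot>\<^sub>v u i" using eigvec[OF i] by auto
  have Xi_x: "Xi j *\<^sub>v x j \<in> carrier_vec d" for j
    using Xi[of j] x_carrier[of j] by simp
  show "u i \<bullet> trajectory x 1 = lam i / 2 * (u i \<bullet> trajectory x 0) + u i \<bullet> (Xi 0 *\<^sub>v x 0)"
    unfolding trajectory_1
    by (rule eigvec_coord_recurrence(2)[OF A u trajectory_carrier trajectory_carrier Xi_x])
  show "u i \<bullet> trajectory x (Suc j)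
      = lam i * (u i \<bullet> trajectory x j) - beta * (u i \<bullet> trajectory x (j - 1)) + u i \<bullet> (Xi j *\<^sub>v x j)"
    if "1 \<le> j" "j < T"
    unfolding trajectory_Suc[OF that]
    by (rule eigvec_coord_recurrence(1)[OF A u trajectory_carrier trajectory_carrier Xi_x])
qed

lemma trajectory_top_noise_le:
  assumes "j < T"
  shows "top_norm (Xi j *\<^sub>v x j) \<le> (lam k - 2 * sqrt beta) / 32 * top_norm (trajectory x j)"
proof -
  have "top_norm (Xi j *\<^sub>v x j) \<le> (lam k - 2 * sqrt beta) / 32 * (cos_angle j * vnorm (x j))"
    using top_norm_noise_le[OF x_carrier[of j], of j] by simp
  also have "\<dots> \<le> (lam k - 2 * sqrt beta) / 32 * top_norm (X j *\<^sub>v x j)"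
    using cos_angle_le_top_norm[OF x_carrier[of j]] beta by (intro mult_left_mono) auto
  finally show ?thesis using trajectory_eq[OF assms] by simp
qed

lemma trajectory_bottom_noise_le:
  assumes "j < T" "0 < cos_angle j"
  shows "bottom_norm (Xi j *\<^sub>v x j)
           \<le> (lam k - 2 * sqrt beta) / 32 * eps * (1 + tan_angle j) * top_norm (trajectory x j)"
proof -
  have "bottom_norm (Xi j *\<^sub>v x j) \<le> (lam k - 2 * sqrt beta) / 32 * eps * vnorm (x j)"
    by (rule bottom_norm_noise_le[OF x_carrier])
  also have "\<dots> \<le> (lam k - 2 * sqrt beta) / 32 * eps * ((1 + tan_angle j) * top_norm (X j *\<^sub>v x j))"
    using components_le_tan_angle(2)[OF assms(2) x_carrier[of j]] beta eps
    by (intro mult_left_mono) auto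
  finally show ?thesis using trajectory_eq[OF assms(1)] by (simp add: mult_ac)
qed

lemma trajectory_block_estimate:
  assumes T: "1 \<le> T" and cos_pos: "\<And>j. j < T \<Longrightarrow> 0 < cos_angle j" and x0: "x 0 \<noteq> 0\<^sub>v k"
  shows "0 < top_norm (trajectory x T)"
    and "bottom_norm (trajectory x T)
           \<le> anpm_tan_bound (lam k) beta eps tan_angle T * top_norm (trajectory x T)"
proof -
  define C where "C = (\<lambda>j i. u i \<bullet> trajectory x j)"
  define M where "M = (\<lambda>j i. u i \<bullet> (Xi j *\<^sub>v x j))"
  have norms: "L2_set (C j) {1..k} = top_norm (trajectory x j)"
    "L2_set (C j) {k+1..d} = bottom_norm (trajectory x j)"
    "L2_set (M j) {1..k} = top_norm (Xi j *\<^sub>v x j)"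
    "L2_set (M j) {k+1..d} = bottom_norm (Xi j *\<^sub>v x j)" for j
    unfolding C_def M_def top_norm_def bottom_norm_def by simp_all
  have range: "1 \<le> i \<and> i \<le> d" if "i \<in> {1..k} \<union> {k+1..d}" for i
    using that dims by auto
  have c1: "C 1 i = lam i / 2 * C 0 i + M 0 i" if "i \<in> {1..k} \<union> {k+1..d}" for i
    unfolding C_def M_def using trajectory_coord_recurrence(1) range[OF that] by blast
  have rec: "C (Suc j) i = lam i * C j i - beta * C (j - 1) i + M j i"
    if "i \<in> {1..k} \<union> {k+1..d}" "1 \<le> j" "j < T" for i j
    unfolding C_def M_def using trajectory_coord_recurrence(2) range[OF that(1)] that(2,3) by blast
  have T0: "0 < T" using T by simp
  have init: "L2_set (C 0) {k+1..d} \<le> tan_angle 0 * L2_set (C 0) {1..k}"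
    unfolding norms using components_le_tan_angle(1)[OF cos_pos[OF T0] x_carrier[of 0]] trajectory_eq[OF T0]
    by simp
  have "0 < cos_angle 0 * vnorm (x 0)"
    using cos_pos[OF T0] vnorm_normalize(1)[of "x 0"] x0 x_carrier[of 0] by simp
  then have pos0: "0 < L2_set (C 0) {1..k}"
    unfolding norms using cos_angle_le_top_norm[OF x_carrier[of 0], of 0] trajectory_eq[OF T0] by simp
  have noise_top: "L2_set (M j) {1..k} \<le> (lam k - 2 * sqrt beta) / 32 * L2_set (C j) {1..k}"
    if "j < T" for j
    unfolding norms by (rule trajectory_top_noise_le[OF that])
  have noise_bottom: "L2_set (M j) {k+1..d}
      \<le> (lam k - 2 * sqrt beta) / 32 * eps * (1 + tan_angle j) * L2_set (C j) {1..k}"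
    if "j < T" for j
    unfolding norms by (rule trajectory_bottom_noise_le[OF that cos_pos[OF that]])
  have c1_top: "C 1 i = lam i / 2 * C 0 i + M 0 i" if "i \<in> {1..k}" for i
    using c1 that by blast
  have rec_top: "C (Suc j) i = lam i * C j i - beta * C (j - 1) i + M j i"
    if "i \<in> {1..k}" "1 \<le> j" "j < T" for i j
    using rec that by blast
  show "0 < top_norm (trajectory x T)"
    using L2_set_top_block_pos[OF beta(1,2) eigval_top_ge c1_top rec_top noise_top pos0]
    unfolding norms .
  show "bottom_norm (trajectory x T)
      \<le> anpm_tan_bound (lam k) beta eps tan_angle T * top_norm (trajectory x T)"
    using L2_set_block_estimate[OF beta(1,2) eigval_top_ge eigval_bottom_abs_le c1 rec
        noise_top noise_bottom init tan_angle_nonneg eps]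
    unfolding norms .
qed

end

fun pullback :: "nat \<Rightarrow> real vec \<Rightarrow> nat \<Rightarrow> real vec" where
  "pullback T v 0 = v"
| "pullback T v (Suc n) = minv (R (T - 1 - n)) *\<^sub>v pullback T v n"

lemma pullback_carrier_nonzero:
  assumes R_inv: "\<And>j. 1 \<le> j \<Longrightarrow> j < T \<Longrightarrow> minv_inverts k (R j)"
    and v: "v \<in> carrier_vec k" "v \<noteq> 0\<^sub>v k"
  shows "n < T \<Longrightarrow> pullback T v n \<in> carrier_vec k \<and> pullback T v n \<noteq> 0\<^sub>v k"
proof (induction n)
  case (Suc n)
  let ?j = "T - 1 - n"
  have j: "1 \<le> ?j" "?j < T" using Suc.prems by auto
  have IH: "pullback T v n \<in> carrier_vec k" "pullback T v n \<noteq> 0\<^sub>v k" using Suc by auto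
  have inv: "minv (R ?j) \<in> carrier_mat k k" "R ?j * minv (R ?j) = 1\<^sub>m k"
    using R_inv[OF j] unfolding minv_inverts_def by auto
  have "pullback T v (Suc n) \<noteq> 0\<^sub>v k"
  proof
    assume zero: "pullback T v (Suc n) = 0\<^sub>v k"
    have "pullback T v n = R ?j *\<^sub>v pullback T v (Suc n)"
      using assoc_mult_mat_vec[OF R_carrier[OF j(1)] inv(1) IH(1)] inv(2) IH(1) by simp
    also have "\<dots> = 0\<^sub>v k" using zero R_carrier[OF j(1)] by auto
    finally show False using IH(2) by simp
  qed
  then show ?case using inv(1) IH(1) by simp
qed (use v in simp)

context
  fixes T :: nat
  assumes T: "1 \<le> T" and R_inv: "\<And>j. 1 \<le> j \<Longrightarrow> j < T \<Longrightarrow> minv_inverts k (R j)"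
    and cos_pos: "\<And>j. j < T \<Longrightarrow> 0 < cos_angle j"
begin

lemma block_estimate_X_R:
  assumes v: "v \<in> carrier_vec k" "v \<noteq> 0\<^sub>v k"
  shows "0 < top_norm (X T *\<^sub>v (R T *\<^sub>v v))"
    and "bottom_norm (X T *\<^sub>v (R T *\<^sub>v v))
           \<le> anpm_tan_bound (lam k) beta eps tan_angle T * top_norm (X T *\<^sub>v (R T *\<^sub>v v))"
proof -
  define x where "x j = pullback T v (T - 1 - j)" for j
  have x: "x j \<in> carrier_vec k" "x j \<noteq> 0\<^sub>v k" for j
    using pullback_carrier_nonzero[OF R_inv v, where n = "T - 1 - j"] T by (auto simp: x_def)
  have x_prev: "x (j - 1) = minv (R j) *\<^sub>v x j" if "1 \<le> j" "j < T" for j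
  proof -
    have e: "T - 1 - (j - 1) = Suc (T - 1 - j)" "T - 1 - (T - 1 - j) = j" using that by auto
    have "x (j - 1) = pullback T v (Suc (T - 1 - j))" unfolding x_def e(1) ..
    also have "\<dots> = minv (R (T - 1 - (T - 1 - j))) *\<^sub>v pullback T v (T - 1 - j)"
      by (rule pullback.simps(2))
    finally show ?thesis unfolding e(2) x_def .
  qed
  have "trajectory x T = X T *\<^sub>v (R T *\<^sub>v v)"
    using T X_carrier[of T] R_carrier[OF T] v(1)
    by (simp add: trajectory_def x_def assoc_mult_mat_vec)
  then show "0 < top_norm (X T *\<^sub>v (R T *\<^sub>v v))"
    and "bottom_norm (X T *\<^sub>v (R T *\<^sub>v v))
           \<le> anpm_tan_bound (lam k) beta eps tan_angle T * top_norm (X T *\<^sub>v (R T *\<^sub>v v))"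
    using trajectory_block_estimate[OF x(1) R_inv x_prev T cos_pos x(2)] by simp_all
qed

lemma minv_inverts_R: "minv_inverts k (R T)"
proof (rule minv_invertsI[OF R_carrier[OF T]])
  fix v :: "real vec" assume v: "v \<in> carrier_vec k" "v \<noteq> 0\<^sub>v k"
  show "R T *\<^sub>v v \<noteq> 0\<^sub>v k"
  proof
    assume "R T *\<^sub>v v = 0\<^sub>v k"
    then have "X T *\<^sub>v (R T *\<^sub>v v) = 0\<^sub>v d" using X_carrier[of T] by auto
    then have "top_norm (X T *\<^sub>v (R T *\<^sub>v v)) = 0"
      using u_carrier dims by (auto simp: top_norm_def intro!: L2_set_0')
    with block_estimate_X_R(1)[OF v] show False by simp
  qed
qed

lemma cos_angle_lower:
  "1 / sqrt (1 + (anpm_tan_bound (lam k) beta eps tan_angle T)\<^sup>2) \<le> cos_angle T"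
  unfolding cos_angle_def
proof (rule sigma_min_greatest)
  show "0 < dim_col (transpose_mat (cols_mat d u 0 k) * X T)" using X_carrier[of T] dims by simp
next
  define K where "K = anpm_tan_bound (lam k) beta eps tan_angle T"
  fix y assume "y \<in> carrier_vec (dim_col (transpose_mat (cols_mat d u 0 k) * X T))" "vnorm y = 1"
  then have y: "y \<in> carrier_vec k" "vnorm y = 1" using X_carrier[of T] by auto
  define v where "v = minv (R T) *\<^sub>v y"
  have inv: "minv (R T) \<in> carrier_mat k k" "R T * minv (R T) = 1\<^sub>m k"
    using minv_inverts_R unfolding minv_inverts_def by auto
  have v_carrier: "v \<in> carrier_vec k" using inv(1) y(1) by (simp add: v_def)
  have Rv: "R T *\<^sub>v v = y"
    unfolding v_def using assoc_mult_mat_vec[OF R_carrier[OF T] inv(1) y(1)] inv(2) y(1) by simp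
  have "v \<noteq> 0\<^sub>v k"
    using Rv y R_carrier[OF T] vnorm_eq_0_iff[of y] by auto
  then have "bottom_norm (X T *\<^sub>v y) \<le> K * top_norm (X T *\<^sub>v y)"
    using block_estimate_X_R(2)[OF v_carrier] unfolding Rv K_def by simp
  moreover have "0 \<le> K"
    unfolding K_def using anpm_tan_bound_nonneg[OF beta(1,2) eps tan_angle_nonneg] .
  ultimately have "1 / sqrt (1 + K\<^sup>2) \<le> top_norm (X T *\<^sub>v y)"
    using cos_lower_from_tan_bound top_bottom_norm_split[OF y(1), of T] y(2)
    by (simp add: top_norm_def bottom_norm_def)
  then show "1 / sqrt (1 + K\<^sup>2) \<le> vnorm ((transpose_mat (cols_mat d u 0 k) * X T) *\<^sub>v y)"
    using vnorm_top_block[OF y(1)] by simp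
qed

lemma cos_angle_pos: "0 < cos_angle T"
  and tan_angle_le_bound: "tan_angle T \<le> anpm_tan_bound (lam k) beta eps tan_angle T"
  using tan_arccos_le[OF anpm_tan_bound_nonneg[OF beta(1,2) eps tan_angle_nonneg] cos_angle_lower
      cos_angle_bounds(2)]
  by (simp_all add: tan_angle_eq)

end

lemma R_inverts_and_cos_pos:
  "(\<forall>j. 1 \<le> j \<and> j \<le> T \<longrightarrow> minv_inverts k (R j)) \<and> (\<forall>j\<le>T. 0 < cos_angle j)"
proof (induction T)
  case 0
  then show ?case using X0(2) cos_theta_eq[of 0] by simp
next
  case (Suc T)
  then have "minv_inverts k (R (Suc T))" "0 < cos_angle (Suc T)"
    using minv_inverts_R[of "Suc T"] cos_angle_pos[of "Suc T"] by auto
  with Suc show ?case by (auto simp: le_Suc_eq)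
qed

lemma tan_angle_le: "1 \<le> t \<Longrightarrow> tan_angle t \<le> anpm_tan_bound (lam k) beta eps tan_angle t"
  using tan_angle_le_bound[of t] R_inverts_and_cos_pos[of "t - 1"] by auto

end

theorem lemma6:
  fixes d k :: nat and eps beta :: real
    and A :: "real mat" and lam :: "nat \<Rightarrow> real" and u :: "nat \<Rightarrow> real vec"
    and X R :: "nat \<Rightarrow> real mat" and Xi :: "nat \<Rightarrow> real mat"
  assumes dk: "d > k" "k \<ge> 1"
    and eps: "0 < eps" "eps < 1"
    and A: "A \<in> carrier_mat d d" "transpose_mat A = A"
    and psd: "\<forall>x \<in> carrier_vec d. x \<bullet> (A *\<^sub>v x) \<ge> 0"
    and eig_sorted: "\<forall>i j. 1 \<le> i \<and> i \<le> j \<and> j \<le> d \<longrightarrow> lam j \<le> lam i"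
    and eig_nonneg: "lam d \<ge> 0"
    and eigvec: "\<forall>i. 1 \<le> i \<and> i \<le> d \<longrightarrow> u i \<in> carrier_vec d \<and> A *\<^sub>v u i = lam i \<cdot>\<^sub>v u i"
    and orthonormal: "\<forall>i j. 1 \<le> i \<and> i \<le> d \<and> 1 \<le> j \<and> j \<le> d \<longrightarrow>
                         u i \<bullet> u j = (if i = j then 1 else 0)"
    and gap: "lam k > lam (k+1)"
    and beta: "beta > 0" "lam k > 2 * sqrt beta" "2 * sqrt beta \<ge> lam (k+1)"
    and X0: "X 0 \<in> stiefel d k" "cos (theta_k (cols_mat d u 0 k) (X 0)) > 0"
    and Xi_carrier: "\<forall>t. Xi t \<in> carrier_mat d k"
    and pert1: "\<forall>t. opnorm2 (transpose_mat (cols_mat d u k (d - k)) * Xi t)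
                      \<le> (1/32) * (lam k - 2 * sqrt beta) * eps"
    and pert2: "\<forall>t. opnorm2 (transpose_mat (cols_mat d u 0 k) * Xi t)
                      \<le> (1/32) * (lam k - 2 * sqrt beta) * cos (theta_k (cols_mat d u 0 k) (X t))"
    and step1: "is_QR d k ((1/2) \<cdot>\<^sub>m (A * X 0) + Xi 0) (X 1) (R 1)"
    and step: "\<forall>t\<ge>1. is_QR d k (A * X t - beta \<cdot>\<^sub>m (X (t - 1) * minv (R t)) + Xi t)
                         (X (t + 1)) (R (t + 1))"
  shows "let c = (1/32::real);
             lamp = (lam k + sqrt ((lam k)\<^sup>2 - 4 * beta)) / 2;
             Delta = (lam k - 2 * sqrt beta) / lam k;
             gamma = sqrt beta / ((1 - c) * lamp + c * sqrt beta);
             eta = (2/15) * Delta * eps;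
             h = (\<lambda>t. tan (theta_k (cols_mat d u 0 k) (X t)))
         in 0 \<le> gamma \<and> gamma < 1 \<and>
            (\<forall>t\<ge>1. h t \<le> (31/15) * gamma ^ t * h 0
                 + eta * (\<Sum>s<t. (real s + 1) * gamma ^ s * (1 + h (t - 1 - s))))"
proof -
  interpret anpm d k eps beta A lam u X R Xi
    by unfold_locales (use dk eps A eig_sorted eig_nonneg eigvec orthonormal beta X0 Xi_carrier pert1 pert2
        step1 step in simp_all)
  show ?thesis
    using anpm_rate_bounds[OF beta(1,2)] tan_angle_le
    unfolding Let_def anpm_tan_bound_def anpm_rate_def tan_angle_def by simp
qed

end
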